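(* Let $(X,d)$ be a u.l.f. metric space, $h\colon X\to\mathbb{R}$ a bounded map, and $\beta\in\mathbb{R}$. Then $\mathrm{C}^*_u(X)$ has a $(\sigma_h,\beta)$-KMS state if and only if $X$ is amenable.
   Context: A metric space is u.l.f. if for every $r>0$ the cardinalities of its balls of radius $r$ are uniformly bounded. $\mathrm{C}^*_u(X)$ is the norm closure of the $^*$-algebra of operators $a$ on $\ell_2(X)$ with $\sup\{d(x,y):\langle a\delta_y,\delta_x\rangle\neq0\}<\infty$. $\sigma_{h,t}(a)=e^{it\bar h}ae^{-it\bar h}$ with $\bar h$ the diagonal operator $\delta_x\mapsto h(x)\delta_x$. A state $\varphi$ is $(\sigma_h,\beta)$-KMS if $\varphi(a\sigma_{h,i\beta}(b))=\varphi(ba)$ for all $a$ and all analytic $b$ (those for which $t\mapsto\sigma_{h,t}(b)$ extends to an entire function). A partial translation is a bijection $f\colon A\to B$ between subsets of $X$ with $\sup_{x\in A}d(x,f(x))<\infty$. $X$ is amenable if there is a nonzero finitely additive $\mu\colon\mathcal{P}(X)\to[0,\infty)$ with $\mu(A)=\mu(B)$ whenever there is a partial translation $f\colon A\to B$. *)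

theory Defs
  imports "HOL-Analysis.Analysis"
begin

typedef 'a ell2 = "{f :: 'a \<Rightarrow> complex. (\<lambda>x. (cmod (f x))\<^sup>2) summable_on UNIV}"
  morphisms Rep_ell2 Abs_ell2
  by (rule exI[of _ "\<lambda>_. 0"]) simp

definition fnorm2 :: "('a \<Rightarrow> complex) \<Rightarrow> real" where
  "fnorm2 f = sqrt (infsum (\<lambda>x. (cmod (f x))\<^sup>2) UNIV)"

definition ell2_norm :: "'a ell2 \<Rightarrow> real" where
  "ell2_norm f = fnorm2 (Rep_ell2 f)"

definition ell2_inner :: "'a ell2 \<Rightarrow> 'a ell2 \<Rightarrow> complex" where
  "ell2_inner f g = infsum (\<lambda>x. cnj (Rep_ell2 f x) * Rep_ell2 g x) UNIV"

definition delta :: "'a \<Rightarrow> 'a ell2" where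
  "delta y = Abs_ell2 (\<lambda>x. if x = y then 1 else 0)"

type_synonym 'a op = "'a ell2 \<Rightarrow> 'a ell2"

definition bounded_op :: "'a op \<Rightarrow> bool" where
  "bounded_op T \<longleftrightarrow>
     (\<forall>f g h c e. (\<forall>x. Rep_ell2 h x = c * Rep_ell2 f x + e * Rep_ell2 g x) \<longrightarrow>
        (\<forall>x. Rep_ell2 (T h) x = c * Rep_ell2 (T f) x + e * Rep_ell2 (T g) x)) \<and>
     (\<exists>C. \<forall>f. ell2_norm (T f) \<le> C * ell2_norm f)"

text \<open>Operator norm of a pointwise combination of operators, given as a map
  from vectors to functions X -> complex.\<close>
definition comb_norm :: "('a ell2 \<Rightarrow> 'a \<Rightarrow> complex) \<Rightarrow> real" where
  "comb_norm G = Sup {fnorm2 (G f) | f. ell2_norm f \<le> 1}"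

definition op_dist :: "'a op \<Rightarrow> 'a op \<Rightarrow> real" where
  "op_dist T S = comb_norm (\<lambda>f x. Rep_ell2 (T f) x - Rep_ell2 (S f) x)"

definition op_add :: "'a op \<Rightarrow> 'a op \<Rightarrow> 'a op" where
  "op_add T S = (\<lambda>f. Abs_ell2 (\<lambda>x. Rep_ell2 (T f) x + Rep_ell2 (S f) x))"

definition op_scale :: "complex \<Rightarrow> 'a op \<Rightarrow> 'a op" where
  "op_scale c T = (\<lambda>f. Abs_ell2 (\<lambda>x. c * Rep_ell2 (T f) x))"

definition mult_op :: "('a \<Rightarrow> complex) \<Rightarrow> 'a op" where
  "mult_op m = (\<lambda>f. Abs_ell2 (\<lambda>x. m x * Rep_ell2 f x))"

definition positive_op :: "'a op \<Rightarrow> bool" where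
  "positive_op T \<longleftrightarrow> (\<forall>f. ell2_inner f (T f) \<in> \<real> \<and> 0 \<le> Re (ell2_inner f (T f)))"

definition finite_propagation :: "'a::metric_space op \<Rightarrow> bool" where
  "finite_propagation T \<longleftrightarrow>
     (\<exists>R. \<forall>x y. Rep_ell2 (T (delta y)) x \<noteq> 0 \<longrightarrow> dist x y \<le> R)"

definition uniform_roe :: "('a::metric_space) op set" where
  "uniform_roe = {T. bounded_op T \<and>
     (\<forall>\<epsilon>>0. \<exists>S. bounded_op S \<and> finite_propagation S \<and> op_dist T S < \<epsilon>)}"

definition sigma :: "('a \<Rightarrow> real) \<Rightarrow> real \<Rightarrow> 'a op \<Rightarrow> 'a op" where
  "sigma h t a = mult_op (\<lambda>x. exp (\<i> * of_real (t * h x))) \<circ> a \<circ>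
                 mult_op (\<lambda>x. exp (- \<i> * of_real (t * h x)))"

definition entire_op :: "(complex \<Rightarrow> ('a::metric_space) op) \<Rightarrow> bool" where
  "entire_op F \<longleftrightarrow> (\<forall>z. F z \<in> uniform_roe) \<and>
     (\<forall>z. \<exists>D. bounded_op D \<and>
        ((\<lambda>w. comb_norm (\<lambda>f x. (Rep_ell2 (F w f) x - Rep_ell2 (F z f) x) / (w - z)
                               - Rep_ell2 (D f) x)) \<longlongrightarrow> 0) (at z))"

text \<open>F is an entire extension of t |-> sigma_{h,t}(b); b is analytic iff such F exists,
  and then sigma_{h,z}(b) = F z.\<close>
definition analytic_ext :: "('a::metric_space \<Rightarrow> real) \<Rightarrow> 'a op \<Rightarrow> (complex \<Rightarrow> 'a op) \<Rightarrow> bool" where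
  "analytic_ext h b F \<longleftrightarrow> entire_op F \<and> (\<forall>t::real. F (of_real t) = sigma h t b)"

definition is_state :: "(('a::metric_space) op \<Rightarrow> complex) \<Rightarrow> bool" where
  "is_state \<phi> \<longleftrightarrow>
     (\<forall>a\<in>uniform_roe. \<forall>b\<in>uniform_roe. \<forall>c.
        \<phi> (op_add a (op_scale c b)) = \<phi> a + c * \<phi> b) \<and>
     (\<forall>a\<in>uniform_roe. positive_op a \<longrightarrow> \<phi> a \<in> \<real> \<and> 0 \<le> Re (\<phi> a)) \<and>
     \<phi> id = 1"

definition kms_state :: "('a::metric_space \<Rightarrow> real) \<Rightarrow> real \<Rightarrow> ('a op \<Rightarrow> complex) \<Rightarrow> bool" where
  "kms_state h \<beta> \<phi> \<longleftrightarrow> is_state \<phi> \<and>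
     (\<forall>a\<in>uniform_roe. \<forall>b\<in>uniform_roe. \<forall>F. analytic_ext h b F \<longrightarrow>
        \<phi> (a \<circ> F (\<i> * of_real \<beta>)) = \<phi> (b \<circ> a))"

definition ulf :: "'a::metric_space itself \<Rightarrow> bool" where
  "ulf _ \<longleftrightarrow> (\<forall>r>0. \<exists>N::nat. \<forall>x::'a. finite (ball x r) \<and> card (ball x r) \<le> N)"

definition partial_translation :: "('a::metric_space \<Rightarrow> 'a) \<Rightarrow> 'a set \<Rightarrow> 'a set \<Rightarrow> bool" where
  "partial_translation f A B \<longleftrightarrow> bij_betw f A B \<and> (\<exists>R. \<forall>x\<in>A. dist x (f x) \<le> R)"

definition amenable :: "'a::metric_space itself \<Rightarrow> bool" where
  "amenable _ \<longleftrightarrow> (\<exists>\<mu> :: 'a set \<Rightarrow> real.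
     (\<forall>A. 0 \<le> \<mu> A) \<and> (\<exists>A. \<mu> A \<noteq> 0) \<and>
     (\<forall>A B. A \<inter> B = {} \<longrightarrow> \<mu> (A \<union> B) = \<mu> A + \<mu> B) \<and>
     (\<forall>f A B. partial_translation f A B \<longrightarrow> \<mu> A = \<mu> B))"

end

(* If X is amenable, an invariant mean mu yields a trace tau(T) = integral of x |-> T_xx against mu
   on the uniform Roe algebra. For operators of finite propagation, tau(a c) = tau(c a) amounts to
   exchanging two summations over uniformly finite balls; these are cut into finitely many partial
   translations, under which mu is invariant. The general case follows by norm approximation.
   Since sigma_{h, i beta}(b) = exp(-beta h) b exp(beta h), the functional
   a |-> tau(exp(-beta h) a) / tau(exp(-beta h)) is then a KMS state.
   Conversely, a KMS state phi gives the finitely additive measure mu(A) = phi(exp(beta h) chi_A), with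
   mu(X) >= exp(-|beta| sup |h|) > 0, and the KMS condition applied to the weighted partial
   translations implementing g and its inverse shows mu(A) = mu(B) for every partial translation
   g : A -> B. *)

theory Submission
  imports Defs "HOL-Complex_Analysis.Conformal_Mappings"
begin

section \<open>Square-summable functions\<close>

definition square_summable :: "('a \<Rightarrow> complex) \<Rightarrow> bool" where
  "square_summable f \<longleftrightarrow> (\<lambda>x. (cmod (f x))\<^sup>2) summable_on UNIV"

lemma square_summable_Rep_ell2 [simp]: "square_summable (Rep_ell2 f)"
  using Rep_ell2[of f] by (simp add: square_summable_def)

lemma Rep_ell2_Abs_ell2: "square_summable f \<Longrightarrow> Rep_ell2 (Abs_ell2 f) = f"
  by (simp add: Abs_ell2_inverse square_summable_def)

lemma square_summable_mono:
  assumes "square_summable g" "\<And>x. cmod (f x) \<le> cmod (g x)"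
  shows "square_summable f"
  unfolding square_summable_def
  by (rule summable_on_comparison_test[OF assms(1)[unfolded square_summable_def]])
     (auto intro: power_mono assms(2))

lemma square_summable_scale: "square_summable f \<Longrightarrow> square_summable (\<lambda>x. c * f x)"
  unfolding square_summable_def
  by (simp add: norm_mult power_mult_distrib summable_on_cmult_right)

lemma square_summable_mult_bounded:
  assumes "square_summable f" "\<And>x. cmod (m x) \<le> M"
  shows "square_summable (\<lambda>x. m x * f x)"
  using square_summable_scale[OF assms(1), of "of_real M"]
proof (rule square_summable_mono)
  fix x
  have "cmod (m x * f x) \<le> M * cmod (f x)"
    unfolding norm_mult by (rule mult_right_mono[OF assms(2)]) simp
  also have "\<dots> \<le> cmod (of_real M * f x)"
    by (simp add: norm_mult mult_right_mono)
  finally show "cmod (m x * f x) \<le> cmod (of_real M * f x)" .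
qed

lemma square_summable_add:
  assumes "square_summable f" "square_summable g"
  shows "square_summable (\<lambda>x. f x + g x)"
proof -
  have s: "(\<lambda>x. 2 * (cmod (f x))\<^sup>2 + 2 * (cmod (g x))\<^sup>2) summable_on UNIV"
    using assms unfolding square_summable_def
    by (intro summable_on_add summable_on_cmult_right) auto
  show ?thesis unfolding square_summable_def
  proof (rule summable_on_comparison_test[OF s])
    fix x
    have "(cmod (f x + g x))\<^sup>2 \<le> (cmod (f x) + cmod (g x))\<^sup>2"
      by (simp add: power_mono norm_triangle_ineq)
    also have "\<dots> \<le> 2 * (cmod (f x))\<^sup>2 + 2 * (cmod (g x))\<^sup>2"
      by (smt (verit) sum_squares_bound power2_sum)
    finally show "(cmod (f x + g x))\<^sup>2 \<le> 2 * (cmod (f x))\<^sup>2 + 2 * (cmod (g x))\<^sup>2" .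
  qed auto
qed

lemma square_summable_diff:
  assumes "square_summable f" "square_summable g"
  shows "square_summable (\<lambda>x. f x - g x)"
  using square_summable_add[OF assms(1) square_summable_scale[OF assms(2), of "-1"]] by simp

lemma square_summable_delta [simp]: "square_summable (\<lambda>x. if x = y then c else 0)"
proof -
  have "(\<lambda>x. (cmod (if x = y then c else 0))\<^sup>2) summable_on {y}" by simp
  then show ?thesis unfolding square_summable_def
    by (rule summable_on_cong_neutral[THEN iffD1, rotated -1]) auto
qed

lemma Rep_delta: "Rep_ell2 (delta y) x = (if x = y then 1 else 0)"
  unfolding delta_def by (subst Rep_ell2_Abs_ell2) auto

lemma fnorm2_nonneg: "fnorm2 f \<ge> 0"
  unfolding fnorm2_def by (simp add: infsum_nonneg)

lemma fnorm2_zero [simp]: "fnorm2 (\<lambda>x. 0) = 0"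
  unfolding fnorm2_def by simp

lemma L2_set_le_fnorm2:
  assumes "square_summable f" "finite F"
  shows "L2_set (\<lambda>x. cmod (f x)) F \<le> fnorm2 f"
proof -
  have "(\<Sum>x\<in>F. (cmod (f x))\<^sup>2) \<le> infsum (\<lambda>x. (cmod (f x))\<^sup>2) UNIV"
    using assms unfolding square_summable_def by (intro finite_sum_le_infsum) auto
  thus ?thesis unfolding L2_set_def fnorm2_def by simp
qed

lemma norm_le_fnorm2:
  assumes "square_summable f"
  shows "cmod (f x) \<le> fnorm2 f"
  using L2_set_le_fnorm2[OF assms, of "{x}"] by simp

lemma fnorm2_mono:
  assumes "square_summable g" "\<And>x. cmod (f x) \<le> cmod (g x)"
  shows "fnorm2 f \<le> fnorm2 g"
proof -
  have "square_summable f" using square_summable_mono assms by blast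
  hence "infsum (\<lambda>x. (cmod (f x))\<^sup>2) UNIV \<le> infsum (\<lambda>x. (cmod (g x))\<^sup>2) UNIV"
    using assms unfolding square_summable_def by (intro infsum_mono) (auto intro: power_mono)
  thus ?thesis unfolding fnorm2_def by simp
qed

lemma fnorm2_scale:
  assumes "square_summable f"
  shows "fnorm2 (\<lambda>x. c * f x) = cmod c * fnorm2 f"
proof -
  have "infsum (\<lambda>x. (cmod (c * f x))\<^sup>2) UNIV = (cmod c)\<^sup>2 * infsum (\<lambda>x. (cmod (f x))\<^sup>2) UNIV"
    by (simp add: norm_mult power_mult_distrib infsum_cmult_right')
  thus ?thesis unfolding fnorm2_def by (simp add: real_sqrt_mult)
qed

lemma fnorm2_mult_bounded_le:
  assumes "square_summable u" "\<And>x. cmod (m x) \<le> M"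
  shows "fnorm2 (\<lambda>x. m x * u x) \<le> M * fnorm2 u"
proof -
  have M: "M \<ge> 0" using assms(2)[of undefined] norm_ge_zero order_trans by blast
  have "fnorm2 (\<lambda>x. m x * u x) \<le> fnorm2 (\<lambda>x. of_real M * u x)"
    using assms M
    by (intro fnorm2_mono square_summable_scale) (simp_all add: norm_mult mult_right_mono)
  also have "\<dots> = M * fnorm2 u" using fnorm2_scale[OF assms(1)] M by simp
  finally show ?thesis .
qed

lemma fnorm2_triangle:
  assumes "square_summable f" "square_summable g"
  shows "fnorm2 (\<lambda>x. f x + g x) \<le> fnorm2 f + fnorm2 g"
proof -
  have "infsum (\<lambda>x. (cmod (f x + g x))\<^sup>2) UNIV \<le> (fnorm2 f + fnorm2 g)\<^sup>2"
  proof (rule infsum_le_finite_sums)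
    show "(\<lambda>x. (cmod (f x + g x))\<^sup>2) summable_on UNIV"
      using square_summable_add[OF assms] by (simp add: square_summable_def)
  next
    fix F :: "'a set" assume F: "finite F"
    have "L2_set (\<lambda>x. cmod (f x + g x)) F \<le> L2_set (\<lambda>x. cmod (f x) + cmod (g x)) F"
      by (rule L2_set_mono) (auto intro: norm_triangle_ineq)
    also have "\<dots> \<le> L2_set (\<lambda>x. cmod (f x)) F + L2_set (\<lambda>x. cmod (g x)) F"
      by (rule L2_set_triangle_ineq)
    also have "\<dots> \<le> fnorm2 f + fnorm2 g"
      using L2_set_le_fnorm2[OF assms(1) F] L2_set_le_fnorm2[OF assms(2) F] by simp
    finally have "sqrt (\<Sum>x\<in>F. (cmod (f x + g x))\<^sup>2) \<le> fnorm2 f + fnorm2 g"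
      unfolding L2_set_def by simp
    hence "(sqrt (\<Sum>x\<in>F. (cmod (f x + g x))\<^sup>2))\<^sup>2 \<le> (fnorm2 f + fnorm2 g)\<^sup>2"
      by (rule power_mono) (simp add: sum_nonneg)
    thus "(\<Sum>x\<in>F. (cmod (f x + g x))\<^sup>2) \<le> (fnorm2 f + fnorm2 g)\<^sup>2"
      by (simp add: sum_nonneg)
  qed
  then show ?thesis
    unfolding fnorm2_def[of "\<lambda>x. f x + g x"]
    using fnorm2_nonneg[of f] fnorm2_nonneg[of g] by (intro real_le_lsqrt) simp_all
qed

lemma fnorm2_diff_le:
  assumes "square_summable f" "square_summable g"
  shows "fnorm2 (\<lambda>x. f x - g x) \<le> fnorm2 f + fnorm2 g"
  using fnorm2_triangle[OF assms(1) square_summable_scale[OF assms(2), of "-1"]]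
    fnorm2_scale[OF assms(2), of "-1"]
  by simp

lemma ell2_norm_delta [simp]: "ell2_norm (delta y) = 1"
proof -
  have "infsum (\<lambda>x. (cmod (Rep_ell2 (delta y) x))\<^sup>2) UNIV = (\<Sum>x\<in>{y}. (cmod (Rep_ell2 (delta y) x))\<^sup>2)"
    by (intro infsumI has_sum_finite_neutralI[of "{y}"]) (auto simp: Rep_delta)
  thus ?thesis unfolding ell2_norm_def fnorm2_def by (simp add: Rep_delta)
qed

lemma fnorm2_tail_small:
  assumes "square_summable f" "e > 0"
  obtains F where "finite F" "fnorm2 (\<lambda>x. if x \<in> F then 0 else f x) \<le> e"
proof -
  let ?p = "\<lambda>x. (cmod (f x))\<^sup>2"
  have hs: "(?p has_sum infsum ?p UNIV) UNIV"
    using assms(1) unfolding square_summable_def by (rule has_sum_infsum)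
  obtain F where F: "finite F" "dist (sum ?p F) (infsum ?p UNIV) \<le> e\<^sup>2"
    using has_sum_finite_approximation[OF hs, of "e\<^sup>2"] assms(2) by auto
  have "?p summable_on (-F)"
    using assms(1) unfolding square_summable_def by (rule summable_on_subset) auto
  then have "infsum ?p UNIV = sum ?p F + infsum ?p (-F)"
    using infsum_Un_disjoint[of ?p F "-F"] F(1) by (simp add: Compl_partition)
  moreover have "infsum (\<lambda>x. (cmod (if x \<in> F then 0 else f x))\<^sup>2) UNIV = infsum ?p (-F)"
    by (subst infsum_cong_neutral[where T="-F"]) auto
  ultimately have "infsum (\<lambda>x. (cmod (if x \<in> F then 0 else f x))\<^sup>2) UNIV \<le> e\<^sup>2"
    using F(2) by (simp add: dist_real_def)
  then have "fnorm2 (\<lambda>x. if x \<in> F then 0 else f x) \<le> e"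
    unfolding fnorm2_def using assms(2) by (intro real_le_lsqrt) auto
  with F(1) show ?thesis using that by blast
qed

section \<open>Bounded operators and their matrix entries\<close>

definition matrix_entry :: "'a op \<Rightarrow> 'a \<Rightarrow> 'a \<Rightarrow> complex" where
  "matrix_entry T x y = Rep_ell2 (T (delta y)) x"

lemma op_eqI: "(\<And>f x. Rep_ell2 (S f) x = Rep_ell2 (T f) x) \<Longrightarrow> S = T"
  by (simp add: fun_eq_iff Rep_ell2_inject[symmetric])

lemma ell2_norm_nonneg: "ell2_norm f \<ge> 0"
  by (simp add: ell2_norm_def fnorm2_nonneg)

lemma norm_Rep_ell2_le: "cmod (Rep_ell2 f x) \<le> ell2_norm f"
  by (simp add: ell2_norm_def norm_le_fnorm2)

lemma bounded_op_linear:
  assumes "bounded_op T" "\<And>x. Rep_ell2 h x = c * Rep_ell2 f x + e * Rep_ell2 g x"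
  shows "Rep_ell2 (T h) x = c * Rep_ell2 (T f) x + e * Rep_ell2 (T g) x"
  using assms unfolding bounded_op_def by blast

lemma bounded_opE:
  assumes "bounded_op T"
  obtains C where "C \<ge> 0" "\<And>f. ell2_norm (T f) \<le> C * ell2_norm f"
proof -
  obtain C where C: "\<And>f. ell2_norm (T f) \<le> C * ell2_norm f"
    using assms unfolding bounded_op_def by blast
  have "ell2_norm (T f) \<le> max C 0 * ell2_norm f" for f
    using C[of f] ell2_norm_nonneg[of f] by (smt (verit) mult_right_mono)
  thus ?thesis using that[of "max C 0"] by simp
qed

lemma bounded_op_zero:
  assumes "bounded_op T" "\<And>x. Rep_ell2 h x = 0"
  shows "Rep_ell2 (T h) x = 0"
  using bounded_op_linear[OF assms(1), of h 0 h 0 h x] assms(2) by simp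

lemma bounded_op_scale:
  assumes "bounded_op T" "\<And>x. Rep_ell2 h x = c * Rep_ell2 f x"
  shows "Rep_ell2 (T h) x = c * Rep_ell2 (T f) x"
  using bounded_op_linear[OF assms(1), of h c f 0 f x] assms(2) by simp

lemma bounded_op_add:
  assumes "bounded_op T" "\<And>x. Rep_ell2 h x = Rep_ell2 f x + Rep_ell2 g x"
  shows "Rep_ell2 (T h) x = Rep_ell2 (T f) x + Rep_ell2 (T g) x"
  using bounded_op_linear[OF assms(1), of h 1 f 1 g x] assms(2) by simp

lemma bounded_op_diff:
  assumes "bounded_op T" "\<And>x. Rep_ell2 h x = Rep_ell2 f x - Rep_ell2 g x"
  shows "Rep_ell2 (T h) x = Rep_ell2 (T f) x - Rep_ell2 (T g) x"
  using bounded_op_linear[OF assms(1), of h 1 f "-1" g x] assms(2) by simp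

lemma Rep_bounded_op_finite_support:
  assumes "bounded_op T" "finite S" "\<And>x. x \<notin> S \<Longrightarrow> Rep_ell2 f x = 0"
  shows "Rep_ell2 (T f) z = (\<Sum>y\<in>S. Rep_ell2 f y * matrix_entry T z y)"
  using assms(2,3)
proof (induction S arbitrary: f rule: finite_induct)
  case empty
  then show ?case using bounded_op_zero[OF assms(1)] by simp
next
  case (insert a S f)
  define g where "g = Abs_ell2 (\<lambda>x. if x = a then 0 else Rep_ell2 f x)"
  have Rep_g: "Rep_ell2 g x = (if x = a then 0 else Rep_ell2 f x)" for x
    unfolding g_def by (subst Rep_ell2_Abs_ell2) (auto intro: square_summable_mono[of "Rep_ell2 f"])
  have "Rep_ell2 f x = 1 * Rep_ell2 g x + Rep_ell2 f a * Rep_ell2 (delta a) x" for x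
    by (simp add: Rep_g Rep_delta)
  hence "Rep_ell2 (T f) z = 1 * Rep_ell2 (T g) z + Rep_ell2 f a * Rep_ell2 (T (delta a)) z"
    by (rule bounded_op_linear[OF assms(1)])
  hence "Rep_ell2 (T f) z = Rep_ell2 (T g) z + Rep_ell2 f a * matrix_entry T z a"
    by (simp add: matrix_entry_def)
  also have "Rep_ell2 (T g) z = (\<Sum>y\<in>S. Rep_ell2 g y * matrix_entry T z y)"
    using insert.prems by (intro insert.IH) (auto simp: Rep_g)
  also have "\<dots> = (\<Sum>y\<in>S. Rep_ell2 f y * matrix_entry T z y)"
    using insert.hyps(2) by (intro sum.cong refl) (auto simp: Rep_g)
  finally show ?case using insert.hyps by (simp add: add.commute)
qed

lemma zero_if_norm_le_eps:
  fixes d :: "'a::real_normed_vector"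
  assumes "K \<ge> 0" "\<And>e. e > 0 \<Longrightarrow> norm d \<le> K * e"
  shows "d = 0"
proof -
  have "norm d \<le> 0 + e" if e: "e > 0" for e
  proof -
    have "norm d \<le> K * (e / (K + 1))" using assms(2)[of "e / (K + 1)"] e assms(1) by simp
    also have "\<dots> \<le> e" using e assms(1) by (simp add: field_simps)
    finally show ?thesis by simp
  qed
  hence "norm d \<le> 0" by (rule field_le_epsilon)
  thus ?thesis by simp
qed

text \<open>Two bounded operators with the same matrix agree on finitely supported vectors, and
  every vector is finitely supported up to an arbitrarily small tail.\<close>

lemma bounded_op_eqI:
  assumes T: "bounded_op T" and S: "bounded_op S"
    and entries: "\<And>x y. matrix_entry T x y = matrix_entry S x y"
  shows "T = S"
proof (rule op_eqI)
  fix f x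
  obtain CT where CT: "CT \<ge> 0" "\<And>f. ell2_norm (T f) \<le> CT * ell2_norm f"
    using bounded_opE[OF T] by blast
  obtain CS where CS: "CS \<ge> 0" "\<And>f. ell2_norm (S f) \<le> CS * ell2_norm f"
    using bounded_opE[OF S] by blast
  have "Rep_ell2 (T f) x - Rep_ell2 (S f) x = 0"
  proof (rule zero_if_norm_le_eps)
    fix e :: real assume e: "e > 0"
    obtain F where F: "finite F" "fnorm2 (\<lambda>x. if x \<in> F then 0 else Rep_ell2 f x) \<le> e"
      using fnorm2_tail_small[OF square_summable_Rep_ell2 e] by blast
    define g where "g = Abs_ell2 (\<lambda>x. if x \<in> F then Rep_ell2 f x else 0)"
    define t where "t = Abs_ell2 (\<lambda>x. if x \<in> F then 0 else Rep_ell2 f x)"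
    have Rep_g: "Rep_ell2 g = (\<lambda>x. if x \<in> F then Rep_ell2 f x else 0)"
      unfolding g_def by (rule Rep_ell2_Abs_ell2, rule square_summable_mono[of "Rep_ell2 f"]) auto
    have Rep_t: "Rep_ell2 t = (\<lambda>x. if x \<in> F then 0 else Rep_ell2 f x)"
      unfolding t_def by (rule Rep_ell2_Abs_ell2, rule square_summable_mono[of "Rep_ell2 f"]) auto
    have f_split: "\<And>x. Rep_ell2 f x = Rep_ell2 g x + Rep_ell2 t x" by (simp add: Rep_g Rep_t)
    have "Rep_ell2 (T g) x = Rep_ell2 (S g) x"
      using Rep_bounded_op_finite_support[OF T F(1), of g] Rep_bounded_op_finite_support[OF S F(1), of g]
      by (simp add: Rep_g entries)
    then have "Rep_ell2 (T f) x - Rep_ell2 (S f) x = Rep_ell2 (T t) x - Rep_ell2 (S t) x"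
      using bounded_op_add[OF T f_split, of x] bounded_op_add[OF S f_split, of x] by simp
    also have "cmod \<dots> \<le> cmod (Rep_ell2 (T t) x) + cmod (Rep_ell2 (S t) x)"
      by (rule norm_triangle_ineq4)
    also have "\<dots> \<le> CT * ell2_norm t + CS * ell2_norm t"
      using norm_Rep_ell2_le[of "T t" x] norm_Rep_ell2_le[of "S t" x] CT(2)[of t] CS(2)[of t]
      by simp
    also have "\<dots> \<le> (CT + CS) * e"
      using F(2) CT(1) CS(1) by (simp add: ell2_norm_def Rep_t distrib_right add_mono mult_left_mono)
    finally show "norm (Rep_ell2 (T f) x - Rep_ell2 (S f) x) \<le> (CT + CS) * e" .
  qed (use CT CS in simp)
  then show "Rep_ell2 (T f) x = Rep_ell2 (S f) x" by simp
qed

lemma comb_norm_le: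
  assumes "\<And>f. ell2_norm f \<le> 1 \<Longrightarrow> fnorm2 (G f) \<le> B"
  shows "comb_norm G \<le> B"
  unfolding comb_norm_def
proof (rule cSup_least)
  have "fnorm2 (G (delta undefined)) \<in> {fnorm2 (G f) |f. ell2_norm f \<le> 1}"
    by fastforce
  thus "{fnorm2 (G f) |f. ell2_norm f \<le> 1} \<noteq> {}" by blast
qed (use assms in blast)

lemma le_comb_norm:
  assumes "\<And>f. ell2_norm f \<le> 1 \<Longrightarrow> fnorm2 (G f) \<le> B" "ell2_norm f \<le> 1"
  shows "fnorm2 (G f) \<le> comb_norm G"
  unfolding comb_norm_def
  by (rule cSup_upper) (use assms in \<open>auto simp: bdd_above_def\<close>)

lemma comb_norm_nonneg:
  assumes "\<And>f. ell2_norm f \<le> 1 \<Longrightarrow> fnorm2 (G f) \<le> B"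
  shows "0 \<le> comb_norm G"
proof -
  have "fnorm2 (G (delta undefined)) \<le> comb_norm G"
    by (rule le_comb_norm[of G B]) (simp_all add: assms)
  thus ?thesis using fnorm2_nonneg[of "G (delta undefined)"] by linarith
qed

lemma fnorm2_bounded_op_diff_le:
  assumes T: "bounded_op T" and S: "bounded_op S"
  obtains B where "\<And>f. ell2_norm f \<le> 1 \<Longrightarrow> fnorm2 (\<lambda>x. Rep_ell2 (T f) x - Rep_ell2 (S f) x) \<le> B"
proof -
  obtain CT where CT: "CT \<ge> 0" "\<And>f. ell2_norm (T f) \<le> CT * ell2_norm f"
    using bounded_opE[OF T] by blast
  obtain CS where CS: "CS \<ge> 0" "\<And>f. ell2_norm (S f) \<le> CS * ell2_norm f"
    using bounded_opE[OF S] by blast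
  have "fnorm2 (\<lambda>x. Rep_ell2 (T f) x - Rep_ell2 (S f) x) \<le> CT + CS" if "ell2_norm f \<le> 1" for f
  proof -
    have "fnorm2 (\<lambda>x. Rep_ell2 (T f) x - Rep_ell2 (S f) x) \<le> ell2_norm (T f) + ell2_norm (S f)"
      unfolding ell2_norm_def by (rule fnorm2_diff_le) simp_all
    also have "\<dots> \<le> CT * ell2_norm f + CS * ell2_norm f" using CT(2)[of f] CS(2)[of f] by simp
    also have "\<dots> \<le> CT + CS" using that CT(1) CS(1) by (intro add_mono) (auto intro: mult_left_le)
    finally show ?thesis .
  qed
  thus ?thesis using that by blast
qed

lemma fnorm2_le_op_dist:
  assumes "bounded_op T" "bounded_op S" "ell2_norm f \<le> 1"
  shows "fnorm2 (\<lambda>x. Rep_ell2 (T f) x - Rep_ell2 (S f) x) \<le> op_dist T S"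
proof -
  obtain B where "\<And>f. ell2_norm f \<le> 1 \<Longrightarrow> fnorm2 (\<lambda>x. Rep_ell2 (T f) x - Rep_ell2 (S f) x) \<le> B"
    using fnorm2_bounded_op_diff_le[OF assms(1,2)] by blast
  then show ?thesis
    unfolding op_dist_def by (rule le_comb_norm[where G = "\<lambda>f x. Rep_ell2 (T f) x - Rep_ell2 (S f) x"])
      (simp_all add: assms(3))
qed

lemma op_dist_nonneg:
  assumes "bounded_op T" "bounded_op S"
  shows "0 \<le> op_dist T S"
proof -
  obtain B where "\<And>f. ell2_norm f \<le> 1 \<Longrightarrow> fnorm2 (\<lambda>x. Rep_ell2 (T f) x - Rep_ell2 (S f) x) \<le> B"
    using fnorm2_bounded_op_diff_le[OF assms] by blast
  then show ?thesis
    unfolding op_dist_def by (rule comb_norm_nonneg[where G = "\<lambda>f x. Rep_ell2 (T f) x - Rep_ell2 (S f) x"])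
qed

lemma op_dist_le:
  assumes "\<And>f. ell2_norm f \<le> 1 \<Longrightarrow> fnorm2 (\<lambda>x. Rep_ell2 (T f) x - Rep_ell2 (S f) x) \<le> B"
  shows "op_dist T S \<le> B"
  unfolding op_dist_def by (rule comb_norm_le) (rule assms)

lemma op_dist_self: "op_dist T T = 0"
proof -
  have "op_dist T T \<le> 0" by (rule op_dist_le) simp
  moreover have "0 \<le> op_dist T T" unfolding op_dist_def by (rule comb_norm_nonneg[of _ 0]) simp
  ultimately show ?thesis by simp
qed

lemma fnorm2_le_op_dist_mult:
  assumes T: "bounded_op T" and S: "bounded_op S"
  shows "fnorm2 (\<lambda>x. Rep_ell2 (T f) x - Rep_ell2 (S f) x) \<le> op_dist T S * ell2_norm f"
proof (cases "ell2_norm f = 0")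
  case True
  hence "Rep_ell2 f x = 0" for x
    using norm_Rep_ell2_le[of f x] by simp
  hence "Rep_ell2 (T f) x = 0" "Rep_ell2 (S f) x = 0" for x
    using bounded_op_zero[OF T] bounded_op_zero[OF S] by auto
  thus ?thesis using True by simp
next
  case False
  define n where "n = ell2_norm f"
  have n: "n > 0" using False ell2_norm_nonneg[of f] n_def by simp
  define f' where "f' = Abs_ell2 (\<lambda>x. of_real (1/n) * Rep_ell2 f x)"
  have Rep_f': "Rep_ell2 f' = (\<lambda>x. of_real (1/n) * Rep_ell2 f x)"
    unfolding f'_def by (rule Rep_ell2_Abs_ell2[OF square_summable_scale[OF square_summable_Rep_ell2]])
  have "ell2_norm f' = cmod (of_real (1/n)) * fnorm2 (Rep_ell2 f)"
    unfolding ell2_norm_def Rep_f' by (rule fnorm2_scale) simp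
  hence norm_f': "ell2_norm f' = 1"
    using n by (simp add: ell2_norm_def n_def norm_divide)
  have "Rep_ell2 f x = of_real n * Rep_ell2 f' x" for x using n by (simp add: Rep_f')
  hence "(\<lambda>x. Rep_ell2 (T f) x - Rep_ell2 (S f) x)
      = (\<lambda>x. of_real n * (Rep_ell2 (T f') x - Rep_ell2 (S f') x))"
    using bounded_op_scale[OF T] bounded_op_scale[OF S] by (auto simp: algebra_simps)
  hence "fnorm2 (\<lambda>x. Rep_ell2 (T f) x - Rep_ell2 (S f) x)
      = n * fnorm2 (\<lambda>x. Rep_ell2 (T f') x - Rep_ell2 (S f') x)"
    using n by (simp add: fnorm2_scale square_summable_diff)
  also have "\<dots> \<le> n * op_dist T S" using fnorm2_le_op_dist[OF T S, of f'] norm_f' n by simp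
  finally show ?thesis by (simp add: n_def mult.commute)
qed

section \<open>Weighted composition operators and the uniform Roe algebra\<close>

lemma square_summable_reindex:
  assumes "inj_on p B" "square_summable f"
  shows "square_summable (\<lambda>y. if y \<in> B then f (p y) else 0)"
    and "fnorm2 (\<lambda>y. if y \<in> B then f (p y) else 0) \<le> fnorm2 f"
proof -
  define q where "q = (\<lambda>x. (cmod (f x))\<^sup>2)"
  have q_summable: "q summable_on UNIV" using assms(2) unfolding square_summable_def q_def .
  have q_summable_image: "q summable_on (p ` B)" by (rule summable_on_subset[OF q_summable]) simp
  have "(q \<circ> p) summable_on B" using summable_on_reindex[OF assms(1)] q_summable_image by blast
  moreover have "(\<lambda>y. (cmod (if y \<in> B then f (p y) else 0))\<^sup>2) summable_on UNIV \<longleftrightarrow> (q \<circ> p) summable_on B"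
    by (rule summable_on_cong_neutral) (auto simp: q_def)
  ultimately show "square_summable (\<lambda>y. if y \<in> B then f (p y) else 0)"
    unfolding square_summable_def by blast
  have "infsum (\<lambda>y. (cmod (if y \<in> B then f (p y) else 0))\<^sup>2) UNIV = infsum (q \<circ> p) B"
    by (rule infsum_cong_neutral) (auto simp: q_def)
  also have "\<dots> = infsum q (p ` B)" by (rule infsum_reindex[OF assms(1), symmetric])
  also have "\<dots> \<le> infsum q UNIV"
    by (rule infsum_mono2[OF q_summable_image q_summable]) (auto simp: q_def)
  finally show "fnorm2 (\<lambda>y. if y \<in> B then f (p y) else 0) \<le> fnorm2 f"
    unfolding fnorm2_def q_def by simp
qed

definition weighted_comp_op :: "('a \<Rightarrow> 'a) \<Rightarrow> 'a set \<Rightarrow> ('a \<Rightarrow> complex) \<Rightarrow> 'a op" where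
  "weighted_comp_op p B m = (\<lambda>f. Abs_ell2 (\<lambda>y. if y \<in> B then m y * Rep_ell2 f (p y) else 0))"

lemma Rep_weighted_comp_op:
  assumes "inj_on p B" "\<And>x. cmod (m x) \<le> M"
  shows "Rep_ell2 (weighted_comp_op p B m f) y = (if y \<in> B then m y * Rep_ell2 f (p y) else 0)"
proof -
  have "square_summable (\<lambda>y. m y * (if y \<in> B then Rep_ell2 f (p y) else 0))"
    by (rule square_summable_mult_bounded[OF square_summable_reindex(1)[OF assms(1)] assms(2)]) simp
  moreover have "(\<lambda>y. m y * (if y \<in> B then Rep_ell2 f (p y) else 0))
      = (\<lambda>y. if y \<in> B then m y * Rep_ell2 f (p y) else 0)"
    by auto
  ultimately show ?thesis unfolding weighted_comp_op_def by (simp add: Rep_ell2_Abs_ell2)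
qed

lemma fnorm2_weighted_comp_op_le:
  assumes "inj_on p B" "\<And>y. cmod (m y) \<le> M"
  shows "fnorm2 (\<lambda>y. if y \<in> B then m y * Rep_ell2 f (p y) else 0) \<le> M * ell2_norm f"
proof -
  have M: "M \<ge> 0" using assms(2)[of undefined] norm_ge_zero order_trans by blast
  have "(\<lambda>y. if y \<in> B then m y * Rep_ell2 f (p y) else 0)
      = (\<lambda>y. m y * (if y \<in> B then Rep_ell2 f (p y) else 0))"
    by auto
  then have "fnorm2 (\<lambda>y. if y \<in> B then m y * Rep_ell2 f (p y) else 0)
      \<le> M * fnorm2 (\<lambda>y. if y \<in> B then Rep_ell2 f (p y) else 0)"
    using fnorm2_mult_bounded_le[OF square_summable_reindex(1)[OF assms(1) square_summable_Rep_ell2] assms(2)]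
    by simp
  also have "\<dots> \<le> M * ell2_norm f" unfolding ell2_norm_def
    by (rule mult_left_mono[OF square_summable_reindex(2)[OF assms(1)] M]) simp
  finally show ?thesis .
qed

lemma bounded_op_weighted_comp_op:
  assumes "inj_on p B" "\<And>x. cmod (m x) \<le> M"
  shows "bounded_op (weighted_comp_op p B m)"
  unfolding bounded_op_def
proof (intro conjI allI impI)
  fix f g h :: "'a ell2" and c e :: complex and x
  assume "\<forall>x. Rep_ell2 h x = c * Rep_ell2 f x + e * Rep_ell2 g x"
  then show "Rep_ell2 (weighted_comp_op p B m h) x
      = c * Rep_ell2 (weighted_comp_op p B m f) x + e * Rep_ell2 (weighted_comp_op p B m g) x"
    by (simp add: Rep_weighted_comp_op[OF assms] algebra_simps)
next
  have "ell2_norm (weighted_comp_op p B m f) \<le> M * ell2_norm f" for f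
    using fnorm2_weighted_comp_op_le[OF assms]
    by (simp add: ell2_norm_def Rep_weighted_comp_op[OF assms, abs_def])
  then show "\<exists>C. \<forall>f. ell2_norm (weighted_comp_op p B m f) \<le> C * ell2_norm f" by blast
qed

lemma finite_propagation_weighted_comp_op:
  assumes "inj_on p B" "\<And>x. cmod (m x) \<le> M" "\<And>y. y \<in> B \<Longrightarrow> dist y (p y) \<le> R"
  shows "finite_propagation (weighted_comp_op p B m)"
  unfolding finite_propagation_def
proof (intro exI allI impI)
  fix x y assume "Rep_ell2 (weighted_comp_op p B m (delta y)) x \<noteq> 0"
  hence "x \<in> B" "p x = y"
    by (auto simp: Rep_weighted_comp_op[OF assms(1,2)] Rep_delta split: if_splits)
  thus "dist x y \<le> R" using assms(3) by auto
qed

lemma bounded_op_comp: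
  assumes T: "bounded_op T" and S: "bounded_op S"
  shows "bounded_op (T \<circ> S)"
  unfolding bounded_op_def
proof (intro conjI allI impI)
  fix f g h :: "'a ell2" and c e :: complex and x
  assume "\<forall>x. Rep_ell2 h x = c * Rep_ell2 f x + e * Rep_ell2 g x"
  then have "\<And>x. Rep_ell2 (S h) x = c * Rep_ell2 (S f) x + e * Rep_ell2 (S g) x"
    using bounded_op_linear[OF S] by blast
  thus "Rep_ell2 ((T \<circ> S) h) x = c * Rep_ell2 ((T \<circ> S) f) x + e * Rep_ell2 ((T \<circ> S) g) x"
    using bounded_op_linear[OF T] by simp
next
  obtain CT where CT: "CT \<ge> 0" "\<And>f. ell2_norm (T f) \<le> CT * ell2_norm f"
    using bounded_opE[OF T] by blast
  obtain CS where CS: "\<And>f. ell2_norm (S f) \<le> CS * ell2_norm f"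
    using bounded_opE[OF S] by blast
  have "ell2_norm (T (S f)) \<le> (CT * CS) * ell2_norm f" for f
    using CT(2)[of "S f"] mult_left_mono[OF CS[of f] CT(1)] by simp
  thus "\<exists>C. \<forall>f. ell2_norm ((T \<circ> S) f) \<le> C * ell2_norm f" by auto
qed

lemma uniform_roeI:
  assumes "bounded_op T" "finite_propagation T"
  shows "T \<in> uniform_roe"
  unfolding uniform_roe_def using assms by (auto intro!: exI[of _ T] simp: op_dist_self)

lemma uniform_roe_bounded_op: "T \<in> uniform_roe \<Longrightarrow> bounded_op T"
  unfolding uniform_roe_def by blast

lemma uniform_roe_approx:
  assumes "T \<in> uniform_roe" "e > 0"
  obtains S where "bounded_op S" "finite_propagation S" "op_dist T S < e"
  using assms unfolding uniform_roe_def by blast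

lemma weighted_comp_op_in_uniform_roe:
  assumes "inj_on p B" "\<And>x. cmod (m x) \<le> M" "\<And>y. y \<in> B \<Longrightarrow> dist y (p y) \<le> R"
  shows "weighted_comp_op p B m \<in> uniform_roe"
  using assms
  by (intro uniform_roeI bounded_op_weighted_comp_op finite_propagation_weighted_comp_op)

lemma mult_op_eq_weighted_comp_op: "mult_op m = weighted_comp_op id UNIV m"
  unfolding mult_op_def weighted_comp_op_def by simp

lemma bounded_op_mult_op: "(\<And>x. cmod (m x) \<le> M) \<Longrightarrow> bounded_op (mult_op m)"
  unfolding mult_op_eq_weighted_comp_op by (rule bounded_op_weighted_comp_op) auto

lemma Rep_mult_op: "(\<And>x. cmod (m x) \<le> M) \<Longrightarrow> Rep_ell2 (mult_op m f) y = m y * Rep_ell2 f y"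
  unfolding mult_op_eq_weighted_comp_op by (subst Rep_weighted_comp_op) auto

lemma mult_op_in_uniform_roe: "(\<And>x. cmod (m x) \<le> M) \<Longrightarrow> mult_op m \<in> uniform_roe"
  unfolding mult_op_eq_weighted_comp_op by (rule weighted_comp_op_in_uniform_roe[of _ _ _ M 0]) auto

lemma id_in_uniform_roe: "(id :: 'a::metric_space op) \<in> uniform_roe"
proof -
  have "(id :: 'a op) = mult_op (\<lambda>_. 1)"
    unfolding mult_op_def by (simp add: Rep_ell2_inverse id_def)
  also have "mult_op (\<lambda>_. 1) \<in> uniform_roe"
    by (rule mult_op_in_uniform_roe[of _ 1]) simp
  finally show ?thesis .
qed

lemma positive_op_mult_op:
  assumes m: "\<And>x. cmod (m x) \<le> M" and real: "\<And>x. m x \<in> \<real>" and nonneg: "\<And>x. 0 \<le> Re (m x)"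
  shows "positive_op (mult_op m)"
  unfolding positive_op_def
proof
  fix f
  have "0 \<le> cnj (Rep_ell2 f x) * Rep_ell2 (mult_op m f) x" for x
  proof -
    obtain r where r: "m x = of_real r" using real[of x] by (auto elim: Reals_cases)
    have "cnj (Rep_ell2 f x) * Rep_ell2 (mult_op m f) x = of_real (r * (cmod (Rep_ell2 f x))\<^sup>2)"
      using complex_norm_square[of "Rep_ell2 f x"] by (simp add: Rep_mult_op[OF m] r mult.commute)
    moreover have "0 \<le> r" using nonneg[of x] r by simp
    ultimately show ?thesis by (simp add: less_eq_complex_def)
  qed
  then have "0 \<le> infsum (\<lambda>x. cnj (Rep_ell2 f x) * Rep_ell2 (mult_op m f) x) UNIV"
    by (cases "(\<lambda>x. cnj (Rep_ell2 f x) * Rep_ell2 (mult_op m f) x) summable_on UNIV")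
       (simp_all add: infsum_nonneg_complex infsum_not_exists)
  thus "ell2_inner f (mult_op m f) \<in> \<real> \<and> 0 \<le> Re (ell2_inner f (mult_op m f))"
    unfolding ell2_inner_def by (simp add: less_eq_complex_def complex_is_Real_iff)
qed

lemma Rep_op_add_scale:
  "Rep_ell2 (op_add a (op_scale c b) f) x = Rep_ell2 (a f) x + c * Rep_ell2 (b f) x"
proof -
  have "Rep_ell2 (op_scale c b f) = (\<lambda>x. c * Rep_ell2 (b f) x)"
    unfolding op_scale_def by (rule Rep_ell2_Abs_ell2[OF square_summable_scale[OF square_summable_Rep_ell2]])
  then show ?thesis
    unfolding op_add_def
    by (simp add: Rep_ell2_Abs_ell2[OF square_summable_add[OF square_summable_Rep_ell2
          square_summable_scale[OF square_summable_Rep_ell2]]])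
qed

lemma ell2_inner_delta_apply: "ell2_inner (delta x) (a (delta x)) = matrix_entry a x x"
proof -
  have "ell2_inner (delta x) (a (delta x)) = (\<Sum>y\<in>{x}. cnj (Rep_ell2 (delta x) y) * Rep_ell2 (a (delta x)) y)"
    unfolding ell2_inner_def by (intro infsumI has_sum_finite_neutralI[of "{x}"]) (auto simp: Rep_delta)
  thus ?thesis by (simp add: Rep_delta matrix_entry_def)
qed

lemma mult_op_comp_in_uniform_roe:
  assumes T: "T \<in> uniform_roe" and m: "\<And>x. cmod (m x) \<le> M"
  shows "mult_op m \<circ> T \<in> uniform_roe"
proof -
  have M: "M \<ge> 0" using m[of undefined] norm_ge_zero order_trans by blast
  have bT: "bounded_op T" using T by (rule uniform_roe_bounded_op)
  have bm: "bounded_op (mult_op m)" by (rule bounded_op_mult_op[OF m])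
  have "\<exists>S. bounded_op S \<and> finite_propagation S \<and> op_dist (mult_op m \<circ> T) S < e" if e: "e > 0" for e
  proof -
    obtain S where S: "bounded_op S" "finite_propagation S" "op_dist T S < e / (M + 1)"
      using uniform_roe_approx[OF T, of "e / (M + 1)"] e M by auto
    have fp: "finite_propagation (mult_op m \<circ> S)"
      using S(2) unfolding finite_propagation_def by (auto simp: Rep_mult_op[OF m])
    have "op_dist (mult_op m \<circ> T) (mult_op m \<circ> S) \<le> M * op_dist T S"
    proof (rule op_dist_le)
      fix f :: "'a ell2" assume f: "ell2_norm f \<le> 1"
      have "(\<lambda>x. Rep_ell2 ((mult_op m \<circ> T) f) x - Rep_ell2 ((mult_op m \<circ> S) f) x)
          = (\<lambda>x. m x * (Rep_ell2 (T f) x - Rep_ell2 (S f) x))"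
        by (auto simp: Rep_mult_op[OF m] algebra_simps)
      hence "fnorm2 (\<lambda>x. Rep_ell2 ((mult_op m \<circ> T) f) x - Rep_ell2 ((mult_op m \<circ> S) f) x)
          \<le> M * fnorm2 (\<lambda>x. Rep_ell2 (T f) x - Rep_ell2 (S f) x)"
        using fnorm2_mult_bounded_le[OF square_summable_diff[OF square_summable_Rep_ell2 square_summable_Rep_ell2] m]
        by simp
      also have "\<dots> \<le> M * op_dist T S"
        by (rule mult_left_mono[OF fnorm2_le_op_dist[OF bT S(1) f] M])
      finally show "fnorm2 (\<lambda>x. Rep_ell2 ((mult_op m \<circ> T) f) x - Rep_ell2 ((mult_op m \<circ> S) f) x)
          \<le> M * op_dist T S" .
    qed
    also have "\<dots> \<le> M * (e / (M + 1))" using S(3) M by (intro mult_left_mono) auto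
    also have "\<dots> < e" using e M by (simp add: field_simps)
    finally show ?thesis using bounded_op_comp[OF bm S(1)] fp by blast
  qed
  thus ?thesis unfolding uniform_roe_def using bounded_op_comp[OF bm bT] by blast
qed

section \<open>Integration against a finitely additive measure\<close>

definition fin_add_measure :: "('a set \<Rightarrow> real) \<Rightarrow> bool" where
  "fin_add_measure \<mu> \<longleftrightarrow> (\<forall>A. 0 \<le> \<mu> A) \<and> (\<forall>A B. A \<inter> B = {} \<longrightarrow> \<mu> (A \<union> B) = \<mu> A + \<mu> B)"

lemma fin_add_measure_nonneg: "fin_add_measure \<mu> \<Longrightarrow> 0 \<le> \<mu> A"
  unfolding fin_add_measure_def by blast

lemma fin_add_measure_Un: "fin_add_measure \<mu> \<Longrightarrow> A \<inter> B = {} \<Longrightarrow> \<mu> (A \<union> B) = \<mu> A + \<mu> B"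
  unfolding fin_add_measure_def by blast

lemma fin_add_measure_empty: "fin_add_measure \<mu> \<Longrightarrow> \<mu> {} = 0"
  using fin_add_measure_Un[of \<mu> "{}" "{}"] by simp

lemma fin_add_measure_mono:
  assumes "fin_add_measure \<mu>" "A \<subseteq> B"
  shows "\<mu> A \<le> \<mu> B"
proof -
  have "\<mu> B = \<mu> A + \<mu> (B - A)"
    using fin_add_measure_Un[OF assms(1), of A "B - A"] assms(2) by (simp add: Un_absorb1)
  thus ?thesis using fin_add_measure_nonneg[OF assms(1), of "B - A"] by simp
qed

lemma fin_add_measure_UNION:
  assumes "fin_add_measure \<mu>" "finite P" "disjoint_family_on F P"
  shows "\<mu> (\<Union>p\<in>P. F p) = (\<Sum>p\<in>P. \<mu> (F p))"
  using assms(2,3)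
proof (induction P rule: finite_induct)
  case empty
  then show ?case using fin_add_measure_empty[OF assms(1)] by simp
next
  case (insert a P)
  have "F a \<inter> (\<Union>p\<in>P. F p) = {}"
    using insert.prems insert.hyps(2) unfolding disjoint_family_on_def by auto
  hence "\<mu> (\<Union>p\<in>insert a P. F p) = \<mu> (F a) + \<mu> (\<Union>p\<in>P. F p)"
    using fin_add_measure_Un[OF assms(1)] by simp
  thus ?case
    using insert.IH insert.prems insert.hyps disjoint_family_on_mono[of P "insert a P"] by auto
qed

lemma finite_range_pair:
  assumes "finite (range s)" "finite (range t)"
  shows "finite (range (\<lambda>x. f (s x) (t x)))"
proof -
  have "range (\<lambda>x. f (s x) (t x)) \<subseteq> (\<lambda>p. f (fst p) (snd p)) ` (range s \<times> range t)"
    by (auto intro!: image_eqI[where x = "(s _, t _)"])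
  thus ?thesis using assms by (meson finite_SigmaI finite_imageI finite_subset)
qed

lemma finite_range_comp: "finite (range s) \<Longrightarrow> finite (range (\<lambda>x. s (p x)))"
  by (rule finite_subset[of _ "range s"]) auto

lemma finite_range_restrict: "finite (range s) \<Longrightarrow> finite (range (\<lambda>x. if x \<in> A then s x else 0))"
  by (rule finite_subset[of _ "insert 0 (range s)"]) auto

definition fa_simple_integral :: "('a set \<Rightarrow> real) \<Rightarrow> ('a \<Rightarrow> real) \<Rightarrow> real" where
  "fa_simple_integral \<mu> s = (\<Sum>v\<in>range s. v * \<mu> (s -` {v}))"

text \<open>Computing integrals through a common factorisation \<open>s = \<phi> \<circ> g\<close> reduces sums,
  comparisons and transports of simple functions to finite sums over one partition.\<close>

lemma fa_simple_integral_factor: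
  assumes \<mu>: "fin_add_measure \<mu>" and T: "finite T" "range g \<subseteq> T"
    and s: "finite (range s)" and s_eq: "\<And>x. s x = \<phi> (g x)"
  shows "fa_simple_integral \<mu> s = (\<Sum>p\<in>T. \<phi> p * \<mu> (g -` {p}))"
proof -
  define T' where "T' = {p \<in> T. \<phi> p \<in> range s}"
  have fin_T': "finite T'" using T(1) unfolding T'_def by simp
  have g_T: "g x \<in> T" for x using T(2) by blast
  have fibre: "s -` {v} = (\<Union>p\<in>{p \<in> T'. \<phi> p = v}. g -` {p})" if "v \<in> range s" for v
    using that g_T s_eq unfolding T'_def by auto
  have disj: "disjoint_family_on (\<lambda>p. g -` {p}) Q" for Q
    unfolding disjoint_family_on_def by auto
  have "fa_simple_integral \<mu> s = (\<Sum>v\<in>range s. v * (\<Sum>p\<in>{p \<in> T'. \<phi> p = v}. \<mu> (g -` {p})))"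
    unfolding fa_simple_integral_def
    by (intro sum.cong refl) (simp add: fibre fin_add_measure_UNION[OF \<mu> _ disj] fin_T')
  also have "\<dots> = (\<Sum>v\<in>range s. (\<Sum>p\<in>{p \<in> T'. \<phi> p = v}. \<phi> p * \<mu> (g -` {p})))"
    by (intro sum.cong refl) (simp add: sum_distrib_left)
  also have "\<dots> = (\<Sum>p\<in>T'. \<phi> p * \<mu> (g -` {p}))"
    by (rule sum.group[OF fin_T' s]) (auto simp: T'_def)
  also have "\<dots> = (\<Sum>p\<in>T. \<phi> p * \<mu> (g -` {p}))"
  proof (rule sum.mono_neutral_left[OF T(1)])
    show "T' \<subseteq> T" unfolding T'_def by blast
    show "\<forall>p\<in>T - T'. \<phi> p * \<mu> (g -` {p}) = 0"
    proof
      fix p assume "p \<in> T - T'"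
      hence "g -` {p} = {}" unfolding T'_def using s_eq by auto
      thus "\<phi> p * \<mu> (g -` {p}) = 0" using fin_add_measure_empty[OF \<mu>] by simp
    qed
  qed
  finally show ?thesis .
qed

lemma fa_simple_integral_pair:
  assumes \<mu>: "fin_add_measure \<mu>" and s: "finite (range s)" and t: "finite (range t)"
  shows "fa_simple_integral \<mu> (\<lambda>x. f (s x) (t x))
    = (\<Sum>p\<in>range s \<times> range t. f (fst p) (snd p) * \<mu> ((\<lambda>x. (s x, t x)) -` {p}))"
  by (rule fa_simple_integral_factor[OF \<mu> _ _ finite_range_pair[OF s t]]) (use s t in auto)

lemma fa_simple_integral_add:
  assumes \<mu>: "fin_add_measure \<mu>" and s: "finite (range s)" and t: "finite (range t)"
  shows "fa_simple_integral \<mu> (\<lambda>x. s x + t x) = fa_simple_integral \<mu> s + fa_simple_integral \<mu> t"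
  using fa_simple_integral_pair[OF \<mu> s t, of "\<lambda>a b. a + b"]
    fa_simple_integral_pair[OF \<mu> s t, of "\<lambda>a b. a"] fa_simple_integral_pair[OF \<mu> s t, of "\<lambda>a b. b"]
  by (simp add: distrib_right sum.distrib)

lemma fa_simple_integral_mono:
  assumes \<mu>: "fin_add_measure \<mu>" and s: "finite (range s)" and t: "finite (range t)"
    and le: "\<And>x. s x \<le> t x"
  shows "fa_simple_integral \<mu> s \<le> fa_simple_integral \<mu> t"
proof -
  have "fst p * \<mu> ((\<lambda>x. (s x, t x)) -` {p}) \<le> snd p * \<mu> ((\<lambda>x. (s x, t x)) -` {p})" for p
  proof (cases "(\<lambda>x. (s x, t x)) -` {p} = {}")
    case False
    then obtain x where "(s x, t x) = p" by auto
    hence "fst p \<le> snd p" using le[of x] by auto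
    thus ?thesis by (rule mult_right_mono[OF _ fin_add_measure_nonneg[OF \<mu>]])
  qed (simp add: fin_add_measure_empty[OF \<mu>])
  then show ?thesis
    using fa_simple_integral_pair[OF \<mu> s t, of "\<lambda>a b. a"] fa_simple_integral_pair[OF \<mu> s t, of "\<lambda>a b. b"]
    by (simp add: sum_mono)
qed

lemma fa_simple_integral_const:
  assumes "fin_add_measure \<mu>"
  shows "fa_simple_integral \<mu> (\<lambda>x. c) = c * \<mu> UNIV"
  using fa_simple_integral_factor[OF assms, of "UNIV :: unit set" "\<lambda>_. ()" "\<lambda>x. c" "\<lambda>_. c"] by simp

lemma fa_simple_integral_transport:
  assumes \<mu>: "fin_add_measure \<mu>" and s: "finite (range s)"
    and inv: "\<And>A'. A' \<subseteq> A \<Longrightarrow> \<mu> A' = \<mu> (g ` A')"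
    and g_A: "g ` A = B" and p_B: "\<And>y. y \<in> B \<Longrightarrow> p y \<in> A \<and> g (p y) = y"
    and p_A: "\<And>x. x \<in> A \<Longrightarrow> p (g x) = x"
  shows "fa_simple_integral \<mu> (\<lambda>x. if x \<in> A then s x else 0)
    = fa_simple_integral \<mu> (\<lambda>y. if y \<in> B then s (p y) else 0)"
proof -
  let ?T = "(UNIV :: bool set) \<times> range s" and ?\<phi> = "\<lambda>q. if fst q then snd q else 0"
  have A_fibre: "(\<lambda>x. (x \<in> A, s x)) -` {(True, v)} = {x \<in> A. s x = v}" for v
    by auto
  have B_fibre: "(\<lambda>y. (y \<in> B, s (p y))) -` {(True, v)} = g ` {x \<in> A. s x = v}" for v
  proof
    show "(\<lambda>y. (y \<in> B, s (p y))) -` {(True, v)} \<subseteq> g ` {x \<in> A. s x = v}"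
    proof
      fix y assume "y \<in> (\<lambda>y. (y \<in> B, s (p y))) -` {(True, v)}"
      hence y: "y \<in> B" "s (p y) = v" by auto
      thus "y \<in> g ` {x \<in> A. s x = v}" using p_B[OF y(1)] by force
    qed
    show "g ` {x \<in> A. s x = v} \<subseteq> (\<lambda>y. (y \<in> B, s (p y))) -` {(True, v)}"
      using g_A p_A by auto
  qed
  have "fa_simple_integral \<mu> (\<lambda>x. if x \<in> A then s x else 0)
      = (\<Sum>q\<in>?T. ?\<phi> q * \<mu> ((\<lambda>x. (x \<in> A, s x)) -` {q}))"
    by (rule fa_simple_integral_factor[OF \<mu> _ _ finite_range_restrict[OF s]]) (use s in auto)
  also have "\<dots> = (\<Sum>q\<in>?T. ?\<phi> q * \<mu> ((\<lambda>y. (y \<in> B, s (p y))) -` {q}))"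
  proof (intro sum.cong refl)
    fix q :: "bool \<times> real"
    obtain b v where q: "q = (b, v)" by fastforce
    show "?\<phi> q * \<mu> ((\<lambda>x. (x \<in> A, s x)) -` {q}) = ?\<phi> q * \<mu> ((\<lambda>y. (y \<in> B, s (p y))) -` {q})"
      unfolding q using inv[of "{x \<in> A. s x = v}"] by (cases b) (simp_all add: A_fibre B_fibre)
  qed
  also have "\<dots> = fa_simple_integral \<mu> (\<lambda>y. if y \<in> B then s (p y) else 0)"
    by (rule fa_simple_integral_factor[OF \<mu> _ _ finite_range_restrict[OF finite_range_comp[OF s]], symmetric])
       (use s in auto)
  finally show ?thesis .
qed

lemma fa_simple_integral_restrict_gap:
  assumes \<mu>: "fin_add_measure \<mu>" and s: "finite (range s)" and t: "finite (range t)"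
    and le: "\<And>x. s x \<le> t x"
  shows "fa_simple_integral \<mu> (\<lambda>x. if x \<in> A then t x else 0) - fa_simple_integral \<mu> (\<lambda>x. if x \<in> A then s x else 0)
    \<le> fa_simple_integral \<mu> t - fa_simple_integral \<mu> s"
proof -
  have d: "finite (range (\<lambda>x. t x - s x))" by (rule finite_range_pair[OF t s])
  have "(\<lambda>x. if x \<in> A then t x else 0) = (\<lambda>x. (if x \<in> A then s x else 0) + (if x \<in> A then t x - s x else 0))"
    by auto
  then have "fa_simple_integral \<mu> (\<lambda>x. if x \<in> A then t x else 0)
      = fa_simple_integral \<mu> (\<lambda>x. if x \<in> A then s x else 0) + fa_simple_integral \<mu> (\<lambda>x. if x \<in> A then t x - s x else 0)"
    using fa_simple_integral_add[OF \<mu> finite_range_restrict[OF s] finite_range_restrict[OF d]] by simp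
  moreover have "fa_simple_integral \<mu> (\<lambda>x. if x \<in> A then t x - s x else 0) \<le> fa_simple_integral \<mu> (\<lambda>x. t x - s x)"
    using le by (intro fa_simple_integral_mono[OF \<mu> finite_range_restrict[OF d] d]) auto
  moreover have "fa_simple_integral \<mu> t = fa_simple_integral \<mu> s + fa_simple_integral \<mu> (\<lambda>x. t x - s x)"
    using fa_simple_integral_add[OF \<mu> s d] by simp
  ultimately show ?thesis by linarith
qed

definition bounded_fun :: "('a \<Rightarrow> 'b::real_normed_vector) \<Rightarrow> bool" where
  "bounded_fun u \<longleftrightarrow> (\<exists>M. \<forall>x. norm (u x) \<le> M)"

lemma bounded_funI: "(\<And>x. norm (u x) \<le> M) \<Longrightarrow> bounded_fun u"
  unfolding bounded_fun_def by blast

lemma bounded_funE: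
  assumes "bounded_fun u"
  obtains M where "M \<ge> 0" "\<And>x. norm (u x) \<le> M"
  using assms norm_ge_zero order_trans unfolding bounded_fun_def by metis

lemma bounded_fun_const [simp]: "bounded_fun (\<lambda>x. c)"
  by (rule bounded_funI[of _ "norm c"]) simp

lemma bounded_fun_add: "bounded_fun u \<Longrightarrow> bounded_fun v \<Longrightarrow> bounded_fun (\<lambda>x. u x + v x)"
  unfolding bounded_fun_def by (meson norm_triangle_le add_mono)

lemma bounded_fun_mult_left:
  fixes u :: "'a \<Rightarrow> 'b::real_normed_div_algebra"
  shows "bounded_fun u \<Longrightarrow> bounded_fun (\<lambda>x. c * u x)"
  unfolding bounded_fun_def by (metis norm_mult mult_left_mono norm_ge_zero)

lemma bounded_fun_restrict: "bounded_fun u \<Longrightarrow> bounded_fun (\<lambda>x. if x \<in> A then u x else 0)"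
  by (elim bounded_funE, rule bounded_funI) auto

lemma bounded_fun_sum:
  "finite S \<Longrightarrow> (\<And>i. i \<in> S \<Longrightarrow> bounded_fun (u i)) \<Longrightarrow> bounded_fun (\<lambda>x. \<Sum>i\<in>S. u i x)"
  by (induction S rule: finite_induct) (auto intro: bounded_fun_add)

lemma bounded_fun_Re: "bounded_fun u \<Longrightarrow> bounded_fun (\<lambda>x. Re (u x))"
  by (elim bounded_funE, rule bounded_funI) (use abs_Re_le_cmod order_trans in fastforce)

lemma bounded_fun_Im: "bounded_fun u \<Longrightarrow> bounded_fun (\<lambda>x. Im (u x))"
  by (elim bounded_funE, rule bounded_funI) (use abs_Im_le_cmod order_trans in fastforce)

text \<open>For bounded \<open>u\<close> this supremum is also the infimum over simple functions above \<open>u\<close>,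
  by \<open>fa_integral_sandwich\<close>.\<close>

definition fa_integral :: "('a set \<Rightarrow> real) \<Rightarrow> ('a \<Rightarrow> real) \<Rightarrow> real" where
  "fa_integral \<mu> u = Sup {fa_simple_integral \<mu> s | s. finite (range s) \<and> (\<forall>x. s x \<le> u x)}"

lemma fa_simple_integral_le_fa_integral:
  assumes \<mu>: "fin_add_measure \<mu>" and u: "bounded_fun u"
    and s: "finite (range s)" "\<And>x. s x \<le> u x"
  shows "fa_simple_integral \<mu> s \<le> fa_integral \<mu> u"
  unfolding fa_integral_def
proof (rule cSup_upper)
  obtain M where M: "\<And>x. \<bar>u x\<bar> \<le> M" using u unfolding bounded_fun_def by auto
  have "fa_simple_integral \<mu> s' \<le> fa_simple_integral \<mu> (\<lambda>x. M)"
    if "finite (range s')" "\<And>x. s' x \<le> u x" for s'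
    using that M by (intro fa_simple_integral_mono[OF \<mu>]) (auto simp: abs_le_iff intro: order_trans)
  then show "bdd_above {fa_simple_integral \<mu> s | s. finite (range s) \<and> (\<forall>x. s x \<le> u x)}"
    unfolding bdd_above_def by blast
qed (use s in blast)

lemma fa_integral_le_fa_simple_integral:
  assumes \<mu>: "fin_add_measure \<mu>" and u: "bounded_fun u"
    and t: "finite (range t)" "\<And>x. u x \<le> t x"
  shows "fa_integral \<mu> u \<le> fa_simple_integral \<mu> t"
  unfolding fa_integral_def
proof (rule cSup_least)
  obtain M where M: "\<And>x. \<bar>u x\<bar> \<le> M" using u unfolding bounded_fun_def by auto
  have "- M \<le> u x" for x using M[of x] by arith
  then have "fa_simple_integral \<mu> (\<lambda>x. - M) \<in> {fa_simple_integral \<mu> s | s. finite (range s) \<and> (\<forall>x. s x \<le> u x)}"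
    by (auto intro!: exI[of _ "\<lambda>x. - M"])
  then show "{fa_simple_integral \<mu> s | s. finite (range s) \<and> (\<forall>x. s x \<le> u x)} \<noteq> {}" by blast
next
  fix y assume "y \<in> {fa_simple_integral \<mu> s | s. finite (range s) \<and> (\<forall>x. s x \<le> u x)}"
  then obtain s where "finite (range s)" "\<And>x. s x \<le> u x" "y = fa_simple_integral \<mu> s" by blast
  then show "y \<le> fa_simple_integral \<mu> t"
    using t by (auto intro: fa_simple_integral_mono[OF \<mu>] order_trans)
qed

lemma finite_range_floor_approx:
  assumes u: "bounded_fun u" and n: "n > (0::real)"
  shows "finite (range (\<lambda>x. of_int \<lfloor>u x * n\<rfloor> / n))"
proof -
  obtain M where M: "\<And>x. \<bar>u x\<bar> \<le> M" using u unfolding bounded_fun_def by auto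
  have "range (\<lambda>x. of_int \<lfloor>u x * n\<rfloor> / n) \<subseteq> (\<lambda>k. of_int k / n) ` {- \<lceil>M * n\<rceil> - 1 .. \<lceil>M * n\<rceil>}"
  proof
    fix y assume "y \<in> range (\<lambda>x. of_int \<lfloor>u x * n\<rfloor> / n)"
    then obtain x where y: "y = of_int \<lfloor>u x * n\<rfloor> / n" by blast
    have "\<bar>u x * n\<bar> \<le> M * n" using M[of x] n by (simp add: abs_mult mult_right_mono)
    hence "\<lfloor>u x * n\<rfloor> \<in> {- \<lceil>M * n\<rceil> - 1 .. \<lceil>M * n\<rceil>}"
      by (auto simp: floor_le_iff le_floor_iff abs_le_iff) linarith+
    thus "y \<in> (\<lambda>k. of_int k / n) ` {- \<lceil>M * n\<rceil> - 1 .. \<lceil>M * n\<rceil>}" using y by blast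
  qed
  thus ?thesis by (rule finite_subset) simp
qed

lemma fa_integral_sandwich:
  assumes \<mu>: "fin_add_measure \<mu>" and u: "bounded_fun u" and e: "e > 0"
  obtains s t where "finite (range s)" "finite (range t)" "\<And>x. s x \<le> u x" "\<And>x. u x \<le> t x"
    "fa_simple_integral \<mu> t - fa_simple_integral \<mu> s \<le> e"
proof -
  define n :: real where "n = of_nat (nat \<lceil>\<mu> UNIV / e\<rceil> + 1)"
  have n: "n > 0" "\<mu> UNIV / e \<le> n" unfolding n_def by linarith+
  define s where "s = (\<lambda>x. of_int \<lfloor>u x * n\<rfloor> / n)"
  define t where "t = (\<lambda>x. s x + 1 / n)"
  have s_fin: "finite (range s)" unfolding s_def by (rule finite_range_floor_approx[OF u n(1)])
  have t_fin: "finite (range t)" unfolding t_def by (rule finite_range_pair[OF s_fin, of "\<lambda>_. 1 / n"]) simp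
  have "s x \<le> u x" for x
    unfolding s_def using n by (simp add: divide_le_eq)
  moreover have "u x \<le> t x" for x
  proof -
    have "u x * n < of_int \<lfloor>u x * n\<rfloor> + 1" by linarith
    hence "u x < (of_int \<lfloor>u x * n\<rfloor> + 1) / n" using n by (simp add: less_divide_eq)
    thus ?thesis unfolding t_def s_def by (simp add: add_divide_distrib)
  qed
  moreover have "fa_simple_integral \<mu> t - fa_simple_integral \<mu> s = \<mu> UNIV / n"
    unfolding t_def using fa_simple_integral_add[OF \<mu> s_fin, of "\<lambda>_. 1 / n"] fa_simple_integral_const[OF \<mu>]
    by simp
  moreover have "\<mu> UNIV / n \<le> e" using n e by (simp add: divide_le_eq mult.commute pos_divide_le_eq)
  ultimately show ?thesis using that s_fin t_fin by fastforce
qed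

lemma real_eq_if_abs_diff_le_eps:
  fixes a b :: real
  assumes "\<And>e. e > 0 \<Longrightarrow> \<bar>a - b\<bar> \<le> e"
  shows "a = b"
  using dense_eq0_I[of "a - b"] assms by simp

lemma fa_integral_add:
  assumes \<mu>: "fin_add_measure \<mu>" and u: "bounded_fun u" and v: "bounded_fun v"
  shows "fa_integral \<mu> (\<lambda>x. u x + v x) = fa_integral \<mu> u + fa_integral \<mu> v"
proof (rule real_eq_if_abs_diff_le_eps)
  fix e :: real assume e: "e > 0"
  obtain s1 t1 where 1: "finite (range s1)" "finite (range t1)" "\<And>x. s1 x \<le> u x" "\<And>x. u x \<le> t1 x"
      "fa_simple_integral \<mu> t1 - fa_simple_integral \<mu> s1 \<le> e/2"
    using fa_integral_sandwich[OF \<mu> u, of "e/2"] e by auto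
  obtain s2 t2 where 2: "finite (range s2)" "finite (range t2)" "\<And>x. s2 x \<le> v x" "\<And>x. v x \<le> t2 x"
      "fa_simple_integral \<mu> t2 - fa_simple_integral \<mu> s2 \<le> e/2"
    using fa_integral_sandwich[OF \<mu> v, of "e/2"] e by auto
  have uv: "bounded_fun (\<lambda>x. u x + v x)" by (rule bounded_fun_add[OF u v])
  have "fa_simple_integral \<mu> (\<lambda>x. s1 x + s2 x) \<le> fa_integral \<mu> (\<lambda>x. u x + v x)"
    by (rule fa_simple_integral_le_fa_integral[OF \<mu> uv finite_range_pair[OF 1(1) 2(1)]])
       (simp add: 1(3) 2(3) add_mono)
  moreover have "fa_integral \<mu> (\<lambda>x. u x + v x) \<le> fa_simple_integral \<mu> (\<lambda>x. t1 x + t2 x)"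
    by (rule fa_integral_le_fa_simple_integral[OF \<mu> uv finite_range_pair[OF 1(2) 2(2)]])
       (simp add: 1(4) 2(4) add_mono)
  moreover have "fa_simple_integral \<mu> s1 \<le> fa_integral \<mu> u" "fa_integral \<mu> u \<le> fa_simple_integral \<mu> t1"
    using fa_simple_integral_le_fa_integral[OF \<mu> u 1(1,3)] fa_integral_le_fa_simple_integral[OF \<mu> u 1(2,4)] .
  moreover have "fa_simple_integral \<mu> s2 \<le> fa_integral \<mu> v" "fa_integral \<mu> v \<le> fa_simple_integral \<mu> t2"
    using fa_simple_integral_le_fa_integral[OF \<mu> v 2(1,3)] fa_integral_le_fa_simple_integral[OF \<mu> v 2(2,4)] .
  ultimately show "\<bar>fa_integral \<mu> (\<lambda>x. u x + v x) - (fa_integral \<mu> u + fa_integral \<mu> v)\<bar> \<le> e"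
    using 1(5) 2(5) fa_simple_integral_add[OF \<mu> 1(1) 2(1)] fa_simple_integral_add[OF \<mu> 1(2) 2(2)]
    by linarith
qed

lemma fa_integral_mono:
  assumes \<mu>: "fin_add_measure \<mu>" and u: "bounded_fun u" and v: "bounded_fun v"
    and le: "\<And>x. u x \<le> v x"
  shows "fa_integral \<mu> u \<le> fa_integral \<mu> v"
proof (rule field_le_epsilon)
  fix e :: real assume e: "e > 0"
  obtain s t where st: "finite (range s)" "finite (range t)" "\<And>x. s x \<le> u x" "\<And>x. u x \<le> t x"
      "fa_simple_integral \<mu> t - fa_simple_integral \<mu> s \<le> e"
    using fa_integral_sandwich[OF \<mu> u e] by auto
  have "fa_integral \<mu> u \<le> fa_simple_integral \<mu> t"
    by (rule fa_integral_le_fa_simple_integral[OF \<mu> u st(2,4)])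
  moreover have "fa_simple_integral \<mu> s \<le> fa_integral \<mu> v"
    by (rule fa_simple_integral_le_fa_integral[OF \<mu> v st(1)]) (use st(3) le in \<open>auto intro: order_trans\<close>)
  ultimately show "fa_integral \<mu> u \<le> fa_integral \<mu> v + e" using st(5) by linarith
qed

lemma fa_integral_const:
  assumes \<mu>: "fin_add_measure \<mu>"
  shows "fa_integral \<mu> (\<lambda>x. c) = c * \<mu> UNIV"
  using fa_simple_integral_le_fa_integral[OF \<mu>, of "\<lambda>x. c" "\<lambda>x. c"]
    fa_integral_le_fa_simple_integral[OF \<mu>, of "\<lambda>x. c" "\<lambda>x. c"] fa_simple_integral_const[OF \<mu>, of c]
  by simp

lemma fa_integral_scale_nonneg:
  assumes \<mu>: "fin_add_measure \<mu>" and u: "bounded_fun u" and c: "c \<ge> 0"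
  shows "fa_integral \<mu> (\<lambda>x. c * u x) = c * fa_integral \<mu> u"
proof (rule real_eq_if_abs_diff_le_eps)
  fix e :: real assume e: "e > 0"
  obtain s t where st: "finite (range s)" "finite (range t)" "\<And>x. s x \<le> u x" "\<And>x. u x \<le> t x"
      "fa_simple_integral \<mu> t - fa_simple_integral \<mu> s \<le> e / (c + 1)"
    using fa_integral_sandwich[OF \<mu> u, of "e / (c + 1)"] e c by auto
  have cu: "bounded_fun (\<lambda>x. c * u x)" by (rule bounded_fun_mult_left[OF u])
  have scale: "fa_simple_integral \<mu> (\<lambda>x. c * s x) = c * fa_simple_integral \<mu> s" if "finite (range s)" for s
    using fa_simple_integral_factor[OF \<mu> that subset_refl that, of "\<lambda>v. v"]
      fa_simple_integral_factor[OF \<mu> that subset_refl finite_range_imageI[OF that], of "\<lambda>v. c * v"]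
    by (simp add: sum_distrib_left mult.assoc)
  have "fa_simple_integral \<mu> (\<lambda>x. c * s x) \<le> fa_integral \<mu> (\<lambda>x. c * u x)"
    using st(3) c by (intro fa_simple_integral_le_fa_integral[OF \<mu> cu finite_range_imageI[OF st(1)]] mult_left_mono)
  moreover have "fa_integral \<mu> (\<lambda>x. c * u x) \<le> fa_simple_integral \<mu> (\<lambda>x. c * t x)"
    using st(4) c by (intro fa_integral_le_fa_simple_integral[OF \<mu> cu finite_range_imageI[OF st(2)]] mult_left_mono)
  moreover have "c * fa_simple_integral \<mu> s \<le> c * fa_integral \<mu> u" "c * fa_integral \<mu> u \<le> c * fa_simple_integral \<mu> t"
    using fa_simple_integral_le_fa_integral[OF \<mu> u st(1,3)] fa_integral_le_fa_simple_integral[OF \<mu> u st(2,4)] c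
    by (auto intro: mult_left_mono)
  moreover have "c * (fa_simple_integral \<mu> t - fa_simple_integral \<mu> s) \<le> e"
  proof -
    have "c * (e / (c + 1)) \<le> e" using e c by (simp add: field_simps)
    then show ?thesis using mult_left_mono[OF st(5) c] by linarith
  qed
  ultimately show "\<bar>fa_integral \<mu> (\<lambda>x. c * u x) - c * fa_integral \<mu> u\<bar> \<le> e"
    using scale[OF st(1)] scale[OF st(2)] by (simp add: right_diff_distrib abs_le_iff)
qed

lemma fa_integral_scale:
  assumes \<mu>: "fin_add_measure \<mu>" and u: "bounded_fun u"
  shows "fa_integral \<mu> (\<lambda>x. c * u x) = c * fa_integral \<mu> u"
proof (cases "c \<ge> 0")
  case False
  have mu: "bounded_fun (\<lambda>x. - u x)" using bounded_fun_mult_left[OF u, of "-1"] by simp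
  have "fa_integral \<mu> (\<lambda>x. u x + - u x) = fa_integral \<mu> u + fa_integral \<mu> (\<lambda>x. - u x)"
    by (rule fa_integral_add[OF \<mu> u mu])
  then have "fa_integral \<mu> (\<lambda>x. - u x) = - fa_integral \<mu> u"
    using fa_integral_const[OF \<mu>, of 0] by simp
  moreover have "fa_integral \<mu> (\<lambda>x. c * u x) = - c * fa_integral \<mu> (\<lambda>x. - u x)"
    using fa_integral_scale_nonneg[OF \<mu> mu, of "- c"] False by simp
  ultimately show ?thesis by simp
qed (rule fa_integral_scale_nonneg[OF assms])

lemma fa_integral_transport:
  assumes \<mu>: "fin_add_measure \<mu>" and u: "bounded_fun u"
    and inv: "\<And>A'. A' \<subseteq> A \<Longrightarrow> \<mu> A' = \<mu> (g ` A')"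
    and g_A: "g ` A = B" and p_B: "\<And>y. y \<in> B \<Longrightarrow> p y \<in> A \<and> g (p y) = y"
    and p_A: "\<And>x. x \<in> A \<Longrightarrow> p (g x) = x"
  shows "fa_integral \<mu> (\<lambda>x. if x \<in> A then u x else 0) = fa_integral \<mu> (\<lambda>y. if y \<in> B then u (p y) else 0)"
proof (rule real_eq_if_abs_diff_le_eps)
  fix e :: real assume e: "e > 0"
  obtain s t where st: "finite (range s)" "finite (range t)" "\<And>x. s x \<le> u x" "\<And>x. u x \<le> t x"
      "fa_simple_integral \<mu> t - fa_simple_integral \<mu> s \<le> e"
    using fa_integral_sandwich[OF \<mu> u e] by auto
  obtain M where M: "\<And>x. \<bar>u x\<bar> \<le> M" using u unfolding bounded_fun_def by auto
  have uA: "bounded_fun (\<lambda>x. if x \<in> A then u x else 0)" by (rule bounded_fun_restrict[OF u])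
  have uB: "bounded_fun (\<lambda>y. if y \<in> B then u (p y) else 0)"
    using M by (intro bounded_fun_restrict bounded_funI) simp
  have "fa_simple_integral \<mu> (\<lambda>x. if x \<in> A then s x else 0) \<le> fa_integral \<mu> (\<lambda>x. if x \<in> A then u x else 0)"
    by (rule fa_simple_integral_le_fa_integral[OF \<mu> uA finite_range_restrict[OF st(1)]]) (simp add: st(3))
  moreover have "fa_integral \<mu> (\<lambda>x. if x \<in> A then u x else 0) \<le> fa_simple_integral \<mu> (\<lambda>x. if x \<in> A then t x else 0)"
    by (rule fa_integral_le_fa_simple_integral[OF \<mu> uA finite_range_restrict[OF st(2)]]) (simp add: st(4))
  moreover have "fa_simple_integral \<mu> (\<lambda>y. if y \<in> B then s (p y) else 0) \<le> fa_integral \<mu> (\<lambda>y. if y \<in> B then u (p y) else 0)"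
    by (rule fa_simple_integral_le_fa_integral[OF \<mu> uB finite_range_restrict[OF finite_range_comp[OF st(1)]]])
       (simp add: st(3))
  moreover have "fa_integral \<mu> (\<lambda>y. if y \<in> B then u (p y) else 0) \<le> fa_simple_integral \<mu> (\<lambda>y. if y \<in> B then t (p y) else 0)"
    by (rule fa_integral_le_fa_simple_integral[OF \<mu> uB finite_range_restrict[OF finite_range_comp[OF st(2)]]])
       (simp add: st(4))
  moreover have "fa_simple_integral \<mu> (\<lambda>x. if x \<in> A then s x else 0) = fa_simple_integral \<mu> (\<lambda>y. if y \<in> B then s (p y) else 0)"
    "fa_simple_integral \<mu> (\<lambda>x. if x \<in> A then t x else 0) = fa_simple_integral \<mu> (\<lambda>y. if y \<in> B then t (p y) else 0)"
    using fa_simple_integral_transport[OF \<mu> st(1) inv g_A p_B p_A]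
      fa_simple_integral_transport[OF \<mu> st(2) inv g_A p_B p_A] by simp_all
  moreover have "fa_simple_integral \<mu> (\<lambda>x. if x \<in> A then t x else 0) - fa_simple_integral \<mu> (\<lambda>x. if x \<in> A then s x else 0) \<le> e"
    using fa_simple_integral_restrict_gap[OF \<mu> st(1,2), of A] st(3-5) by (meson order_trans)
  ultimately show "\<bar>fa_integral \<mu> (\<lambda>x. if x \<in> A then u x else 0) - fa_integral \<mu> (\<lambda>y. if y \<in> B then u (p y) else 0)\<bar> \<le> e"
    by linarith
qed

definition fa_cintegral :: "('a set \<Rightarrow> real) \<Rightarrow> ('a \<Rightarrow> complex) \<Rightarrow> complex" where
  "fa_cintegral \<mu> u = Complex (fa_integral \<mu> (\<lambda>x. Re (u x))) (fa_integral \<mu> (\<lambda>x. Im (u x)))"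

lemma fa_cintegral_add:
  assumes \<mu>: "fin_add_measure \<mu>" and u: "bounded_fun u" and v: "bounded_fun v"
  shows "fa_cintegral \<mu> (\<lambda>x. u x + v x) = fa_cintegral \<mu> u + fa_cintegral \<mu> v"
  unfolding fa_cintegral_def
  using fa_integral_add[OF \<mu> bounded_fun_Re[OF u] bounded_fun_Re[OF v]]
    fa_integral_add[OF \<mu> bounded_fun_Im[OF u] bounded_fun_Im[OF v]]
  by (simp add: complex_eq_iff)

lemma fa_cintegral_scale:
  assumes \<mu>: "fin_add_measure \<mu>" and u: "bounded_fun u"
  shows "fa_cintegral \<mu> (\<lambda>x. c * u x) = c * fa_cintegral \<mu> u"
proof -
  have R: "bounded_fun (\<lambda>x. Re (u x))" and I: "bounded_fun (\<lambda>x. Im (u x))"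
    using bounded_fun_Re[OF u] bounded_fun_Im[OF u] .
  have "(\<lambda>x. Re (c * u x)) = (\<lambda>x. Re c * Re (u x) + (- Im c) * Im (u x))"
    by (simp add: fun_eq_iff)
  then have Re_eq: "fa_integral \<mu> (\<lambda>x. Re (c * u x))
      = Re c * fa_integral \<mu> (\<lambda>x. Re (u x)) + (- Im c) * fa_integral \<mu> (\<lambda>x. Im (u x))"
    by (simp only: fa_integral_add[OF \<mu> bounded_fun_mult_left[OF R] bounded_fun_mult_left[OF I]]
        fa_integral_scale[OF \<mu> R] fa_integral_scale[OF \<mu> I])
  have "(\<lambda>x. Im (c * u x)) = (\<lambda>x. Re c * Im (u x) + Im c * Re (u x))"
    by (simp add: fun_eq_iff add.commute)
  then have Im_eq: "fa_integral \<mu> (\<lambda>x. Im (c * u x))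
      = Re c * fa_integral \<mu> (\<lambda>x. Im (u x)) + Im c * fa_integral \<mu> (\<lambda>x. Re (u x))"
    by (simp only: fa_integral_add[OF \<mu> bounded_fun_mult_left[OF I] bounded_fun_mult_left[OF R]]
        fa_integral_scale[OF \<mu> R] fa_integral_scale[OF \<mu> I])
  show ?thesis unfolding fa_cintegral_def complex_eq_iff Re_eq Im_eq by (simp add: algebra_simps)
qed

lemma fa_cintegral_const:
  assumes "fin_add_measure \<mu>"
  shows "fa_cintegral \<mu> (\<lambda>x. c) = c * of_real (\<mu> UNIV)"
  unfolding fa_cintegral_def using fa_integral_const[OF assms] by (simp add: complex_eq_iff)

lemma fa_cintegral_sum:
  assumes \<mu>: "fin_add_measure \<mu>" and "finite S" "\<And>i. i \<in> S \<Longrightarrow> bounded_fun (u i)"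
  shows "fa_cintegral \<mu> (\<lambda>x. \<Sum>i\<in>S. u i x) = (\<Sum>i\<in>S. fa_cintegral \<mu> (u i))"
  using assms(2,3)
proof (induction S rule: finite_induct)
  case empty
  then show ?case using fa_cintegral_const[OF \<mu>, of 0] by simp
next
  case (insert a S)
  then show ?case
    using fa_cintegral_add[OF \<mu>, of "u a" "\<lambda>x. \<Sum>i\<in>S. u i x"] bounded_fun_sum[OF insert.hyps(1), of u]
    by simp
qed

lemma abs_fa_integral_le:
  assumes \<mu>: "fin_add_measure \<mu>" and M: "\<And>x. \<bar>u x\<bar> \<le> M"
  shows "\<bar>fa_integral \<mu> u\<bar> \<le> M * \<mu> UNIV"
proof -
  have u: "bounded_fun u" using M by (intro bounded_funI) simp
  have "- M \<le> u x" "u x \<le> M" for x using M[of x] by linarith+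
  then have "fa_integral \<mu> u \<le> fa_integral \<mu> (\<lambda>x. M)" "fa_integral \<mu> (\<lambda>x. - M) \<le> fa_integral \<mu> u"
    by (simp_all add: fa_integral_mono[OF \<mu>] u)
  thus ?thesis using fa_integral_const[OF \<mu>, of M] fa_integral_const[OF \<mu>, of "- M"] by simp
qed

lemma norm_fa_cintegral_le:
  assumes \<mu>: "fin_add_measure \<mu>" and M: "\<And>x. cmod (u x) \<le> M"
  shows "cmod (fa_cintegral \<mu> u) \<le> 2 * M * \<mu> UNIV"
proof -
  have "\<bar>fa_integral \<mu> (\<lambda>x. Re (u x))\<bar> \<le> M * \<mu> UNIV"
    by (rule abs_fa_integral_le[OF \<mu>]) (meson M abs_Re_le_cmod order_trans)
  moreover have "\<bar>fa_integral \<mu> (\<lambda>x. Im (u x))\<bar> \<le> M * \<mu> UNIV"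
    by (rule abs_fa_integral_le[OF \<mu>]) (meson M abs_Im_le_cmod order_trans)
  ultimately show ?thesis
    unfolding fa_cintegral_def
    using cmod_le[of "Complex (fa_integral \<mu> (\<lambda>x. Re (u x))) (fa_integral \<mu> (\<lambda>x. Im (u x)))"]
    by simp
qed

lemma norm_fa_cintegral_diff_le:
  assumes \<mu>: "fin_add_measure \<mu>" and u: "bounded_fun u" and v: "bounded_fun v"
    and M: "\<And>x. cmod (u x - v x) \<le> M"
  shows "cmod (fa_cintegral \<mu> u - fa_cintegral \<mu> v) \<le> 2 * M * \<mu> UNIV"
proof -
  have "fa_cintegral \<mu> u = fa_cintegral \<mu> (\<lambda>x. (u x - v x) + v x)" by simp
  also have "\<dots> = fa_cintegral \<mu> (\<lambda>x. u x - v x) + fa_cintegral \<mu> v"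
    by (rule fa_cintegral_add[OF \<mu> _ v]) (rule bounded_funI[OF M])
  finally show ?thesis using norm_fa_cintegral_le[OF \<mu> M] by simp
qed

lemma fa_cintegral_real_ge:
  assumes \<mu>: "fin_add_measure \<mu>" and u: "bounded_fun u"
    and real: "\<And>x. u x \<in> \<real>" and ge: "\<And>x. c \<le> Re (u x)"
  shows "fa_cintegral \<mu> u \<in> \<real>" "c * \<mu> UNIV \<le> Re (fa_cintegral \<mu> u)"
proof -
  have "(\<lambda>x. Im (u x)) = (\<lambda>x. 0)" using real by (auto simp: complex_is_Real_iff)
  thus "fa_cintegral \<mu> u \<in> \<real>"
    unfolding fa_cintegral_def using fa_integral_const[OF \<mu>, of 0] by (simp add: complex_is_Real_iff)
  have "fa_integral \<mu> (\<lambda>x. c) \<le> fa_integral \<mu> (\<lambda>x. Re (u x))"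
    by (rule fa_integral_mono[OF \<mu> bounded_fun_const bounded_fun_Re[OF u] ge])
  thus "c * \<mu> UNIV \<le> Re (fa_cintegral \<mu> u)"
    unfolding fa_cintegral_def using fa_integral_const[OF \<mu>, of c] by simp
qed

lemma fa_cintegral_transport:
  assumes \<mu>: "fin_add_measure \<mu>" and u: "bounded_fun u"
    and inv: "\<And>A'. A' \<subseteq> A \<Longrightarrow> \<mu> A' = \<mu> (g ` A')"
    and g_A: "g ` A = B" and p_B: "\<And>y. y \<in> B \<Longrightarrow> p y \<in> A \<and> g (p y) = y"
    and p_A: "\<And>x. x \<in> A \<Longrightarrow> p (g x) = x"
  shows "fa_cintegral \<mu> (\<lambda>x. if x \<in> A then u x else 0) = fa_cintegral \<mu> (\<lambda>y. if y \<in> B then u (p y) else 0)"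
proof -
  have "(\<lambda>x. Re (if x \<in> A then u x else 0)) = (\<lambda>x. if x \<in> A then Re (u x) else 0)"
    "(\<lambda>x. Im (if x \<in> A then u x else 0)) = (\<lambda>x. if x \<in> A then Im (u x) else 0)"
    "(\<lambda>x. Re (if x \<in> B then u (p x) else 0)) = (\<lambda>x. if x \<in> B then Re (u (p x)) else 0)"
    "(\<lambda>x. Im (if x \<in> B then u (p x) else 0)) = (\<lambda>x. if x \<in> B then Im (u (p x)) else 0)"
    by auto
  then show ?thesis
    unfolding fa_cintegral_def
    using fa_integral_transport[OF \<mu> bounded_fun_Re[OF u] inv g_A p_B p_A]
      fa_integral_transport[OF \<mu> bounded_fun_Im[OF u] inv g_A p_B p_A]
    by simp
qed

section \<open>Invariant measures and the exchange of summations\<close>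

definition translation_invariant :: "('a::metric_space set \<Rightarrow> real) \<Rightarrow> bool" where
  "translation_invariant \<mu> \<longleftrightarrow> (\<forall>f A B. partial_translation f A B \<longrightarrow> \<mu> A = \<mu> B)"

text \<open>Enumerations \<open>ix x\<close> of the balls \<open>ball x r\<close>, with inverses \<open>nb x\<close>. The set \<open>piece i j\<close>
  consists of the points whose \<open>j\<close>-th neighbour sees them as its \<open>i\<close>-th neighbour; on it,
  passing to the \<open>j\<close>-th neighbour is a partial translation onto \<open>piece j i\<close>. This cuts a
  sum over pairs at distance less than \<open>r\<close> into \<open>N\<^sup>2\<close> sums over partial translations.\<close>

locale ball_enumeration =
  fixes r :: real and N :: nat and ix :: "'a::metric_space \<Rightarrow> 'a \<Rightarrow> nat" and nb :: "'a \<Rightarrow> nat \<Rightarrow> 'a"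
  assumes card_ball_le: "card (ball x r) \<le> N"
    and ix_nb: "y \<in> ball x r \<Longrightarrow> ix x y < card (ball x r) \<and> nb x (ix x y) = y"
    and nb_ix: "j < card (ball x r) \<Longrightarrow> nb x j \<in> ball x r \<and> ix x (nb x j) = j"
begin

definition piece :: "nat \<Rightarrow> nat \<Rightarrow> 'a set" where
  "piece i j = {x. j < card (ball x r) \<and> ix (nb x j) x = i}"

lemma sum_ball_eq_sum_pieces:
  "(\<Sum>y\<in>ball x r. K x y)
    = (\<Sum>q\<in>{..<N} \<times> {..<N}. if x \<in> piece (fst q) (snd q) then K x (nb x (snd q)) else 0)"
proof -
  define Q where "Q = {q \<in> {..<N} \<times> {..<N}. x \<in> piece (fst q) (snd q)}"
  have "(\<Sum>q\<in>{..<N} \<times> {..<N}. if x \<in> piece (fst q) (snd q) then K x (nb x (snd q)) else 0)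
      = (\<Sum>q\<in>Q. K x (nb x (snd q)))"
    unfolding Q_def by (simp add: sum.inter_filter[symmetric])
  also have "\<dots> = (\<Sum>y\<in>ball x r. K x y)"
  proof (rule sum.reindex_bij_witness[where i="\<lambda>y. (ix y x, ix x y)" and j="\<lambda>q. nb x (snd q)"])
    fix q assume "q \<in> Q"
    hence q: "snd q < card (ball x r)" "ix (nb x (snd q)) x = fst q" unfolding Q_def piece_def by auto
    show "(ix (nb x (snd q)) x, ix x (nb x (snd q))) = q" using q nb_ix[OF q(1)] by (simp add: prod_eq_iff)
    show "nb x (snd q) \<in> ball x r" using nb_ix[OF q(1)] by simp
  next
    fix y assume y: "y \<in> ball x r"
    have xy: "x \<in> ball y r" using y by (simp add: dist_commute)
    show "nb x (snd (ix y x, ix x y)) = y" using ix_nb[OF y] by simp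
    show "(ix y x, ix x y) \<in> Q"
      using ix_nb[OF xy] ix_nb[OF y] card_ball_le[of y] card_ball_le[of x]
      unfolding Q_def piece_def by auto
  qed simp
  finally show ?thesis by simp
qed

lemma nb_piece:
  assumes "x \<in> piece i j"
  shows "nb x j \<in> piece j i" "nb (nb x j) i = x" "dist x (nb x j) < r"
proof -
  have j: "j < card (ball x r)" "ix (nb x j) x = i" using assms unfolding piece_def by auto
  define y where "y = nb x j"
  have y: "y \<in> ball x r" "ix x y = j" using nb_ix[OF j(1)] unfolding y_def by auto
  have "x \<in> ball y r" using y(1) by (simp add: dist_commute)
  hence "i < card (ball y r)" "nb y i = x" using ix_nb j(2) unfolding y_def by force+
  with y show "nb x j \<in> piece j i" "nb (nb x j) i = x" "dist x (nb x j) < r"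
    unfolding piece_def y_def by auto
qed

lemma fa_cintegral_piece_swap:
  assumes \<mu>: "fin_add_measure \<mu>" and inv: "translation_invariant \<mu>" and K: "\<And>x y. cmod (K x y) \<le> C"
  shows "fa_cintegral \<mu> (\<lambda>x. if x \<in> piece i j then K x (nb x j) else 0)
    = fa_cintegral \<mu> (\<lambda>y. if y \<in> piece j i then K (nb y i) y else 0)"
proof -
  let ?g = "\<lambda>x. nb x j" and ?p = "\<lambda>y. nb y i"
  have g_piece: "?g ` piece i j = piece j i"
    using nb_piece[of _ i j] nb_piece[of _ j i] by (auto intro!: image_eqI)
  have p_piece: "?p y \<in> piece i j \<and> ?g (?p y) = y" if "y \<in> piece j i" for y
    using nb_piece[OF that] by simp
  have p_g: "?p (?g x) = x" if "x \<in> piece i j" for x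
    using nb_piece[OF that] by simp
  have "\<mu> A' = \<mu> (?g ` A')" if "A' \<subseteq> piece i j" for A'
  proof -
    have "inj_on ?g A'" by (rule inj_on_inverseI[of _ ?p]) (use p_g that in auto)
    moreover have "\<forall>x\<in>A'. dist x (?g x) \<le> r"
      using that nb_piece(3) less_imp_le by blast
    ultimately have "partial_translation ?g A' (?g ` A')"
      unfolding partial_translation_def bij_betw_def by blast
    thus ?thesis using inv unfolding translation_invariant_def by blast
  qed
  then have "fa_cintegral \<mu> (\<lambda>x. if x \<in> piece i j then K x (nb x j) else 0)
      = fa_cintegral \<mu> (\<lambda>y. if y \<in> piece j i then K (?p y) (nb (?p y) j) else 0)"
    by (rule fa_cintegral_transport[OF \<mu> bounded_funI[OF K] _ g_piece p_piece p_g])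
  also have "\<dots> = fa_cintegral \<mu> (\<lambda>y. if y \<in> piece j i then K (nb y i) y else 0)"
    using p_piece by (intro arg_cong[where f = "fa_cintegral \<mu>"]) auto
  finally show ?thesis .
qed

end

lemma ball_enumeration_exists:
  assumes "\<And>x::'a::metric_space. finite (ball x r)" "\<And>x::'a. card (ball x r) \<le> N"
  obtains ix nb where "ball_enumeration r N ix (nb :: 'a \<Rightarrow> nat \<Rightarrow> 'a)"
proof -
  define ix where "ix = (\<lambda>x::'a. SOME h. bij_betw h (ball x r) {0..<card (ball x r)})"
  have bij: "bij_betw (ix x) (ball x r) {0..<card (ball x r)}" for x
    unfolding ix_def by (rule someI_ex[of "\<lambda>h. bij_betw h (ball x r) {0..<card (ball x r)}"])
      (rule ex_bij_betw_finite_nat[OF assms(1)])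
  have "ball_enumeration r N ix (\<lambda>x. inv_into (ball x r) (ix x))"
  proof
    fix x y :: 'a assume "y \<in> ball x r"
    then show "ix x y < card (ball x r) \<and> inv_into (ball x r) (ix x) (ix x y) = y"
      using bij[of x] by (auto simp: bij_betw_def inv_into_f_f)
  next
    fix x :: 'a and j assume "j < card (ball x r)"
    then have j: "j \<in> ix x ` ball x r" using bij[of x] by (simp add: bij_betw_def)
    show "inv_into (ball x r) (ix x) j \<in> ball x r \<and> ix x (inv_into (ball x r) (ix x) j) = j"
      using inv_into_into[OF j] f_inv_into_f[OF j] by simp
  qed (rule assms(2))
  then show ?thesis by (rule that)
qed

lemma fa_cintegral_sum_ball_swap:
  fixes K :: "'a::metric_space \<Rightarrow> 'a \<Rightarrow> complex"
  assumes \<mu>: "fin_add_measure \<mu>" and inv: "translation_invariant \<mu>"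
    and fin: "\<And>x::'a. finite (ball x r)" and card: "\<And>x::'a. card (ball x r) \<le> N"
    and K: "\<And>x y. cmod (K x y) \<le> C"
  shows "fa_cintegral \<mu> (\<lambda>x. \<Sum>y\<in>ball x r. K x y) = fa_cintegral \<mu> (\<lambda>y. \<Sum>x\<in>ball y r. K x y)"
proof -
  obtain ix and nb :: "'a \<Rightarrow> nat \<Rightarrow> 'a" where E: "ball_enumeration r N ix nb"
    using ball_enumeration_exists[OF fin card] by blast
  interpret ball_enumeration r N ix nb by (fact E)
  let ?Q = "{..<N} \<times> {..<N}"
  have bounded: "bounded_fun (\<lambda>x. if x \<in> piece i j then K x (nb x j) else 0)"
    "bounded_fun (\<lambda>y. if y \<in> piece i j then K (nb y j) y else 0)" for i j
    by (intro bounded_fun_restrict bounded_funI[of _ C] K)+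
  have "fa_cintegral \<mu> (\<lambda>x. \<Sum>y\<in>ball x r. K x y)
      = fa_cintegral \<mu> (\<lambda>x. \<Sum>q\<in>?Q. if x \<in> piece (fst q) (snd q) then K x (nb x (snd q)) else 0)"
    by (simp add: sum_ball_eq_sum_pieces)
  also have "\<dots> = (\<Sum>q\<in>?Q. fa_cintegral \<mu> (\<lambda>x. if x \<in> piece (fst q) (snd q) then K x (nb x (snd q)) else 0))"
    by (rule fa_cintegral_sum[OF \<mu>]) (auto intro: bounded)
  also have "\<dots> = (\<Sum>q\<in>?Q. fa_cintegral \<mu> (\<lambda>y. if y \<in> piece (snd q) (fst q) then K (nb y (fst q)) y else 0))"
    by (intro sum.cong refl fa_cintegral_piece_swap[OF \<mu> inv K])
  also have "\<dots> = (\<Sum>q\<in>?Q. fa_cintegral \<mu> (\<lambda>y. if y \<in> piece (fst q) (snd q) then K (nb y (snd q)) y else 0))"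
    by (rule sum.reindex_bij_witness[where i="\<lambda>q. (snd q, fst q)" and j="\<lambda>q. (snd q, fst q)"]) (auto cong: if_cong)
  also have "\<dots> = fa_cintegral \<mu> (\<lambda>y. \<Sum>q\<in>?Q. if y \<in> piece (fst q) (snd q) then K (nb y (snd q)) y else 0)"
    by (rule fa_cintegral_sum[OF \<mu>, symmetric]) (auto intro: bounded)
  also have "\<dots> = fa_cintegral \<mu> (\<lambda>y. \<Sum>x\<in>ball y r. K x y)"
    by (simp add: sum_ball_eq_sum_pieces[where K = "\<lambda>a b. K b a"])
  finally show ?thesis .
qed

section \<open>A trace on the uniform Roe algebra\<close>

definition fa_trace :: "('a::metric_space set \<Rightarrow> real) \<Rightarrow> 'a op \<Rightarrow> complex" where
  "fa_trace \<mu> T = fa_cintegral \<mu> (\<lambda>x. matrix_entry T x x)"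

lemma norm_matrix_entry_le:
  assumes "\<And>f. ell2_norm (T f) \<le> C * ell2_norm f"
  shows "cmod (matrix_entry T x y) \<le> C"
  using norm_Rep_ell2_le[of "T (delta y)" x] assms[of "delta y"] unfolding matrix_entry_def by simp

lemma bounded_fun_diagonal: "bounded_op T \<Longrightarrow> bounded_fun (\<lambda>x. matrix_entry T x x)"
  by (elim bounded_opE, rule bounded_funI, rule norm_matrix_entry_le)

lemma finite_propagationE:
  assumes "finite_propagation T"
  obtains R where "R \<ge> 0" "\<forall>x y. matrix_entry T x y \<noteq> 0 \<longrightarrow> dist x y \<le> R"
proof -
  obtain R where R: "\<And>x y. Rep_ell2 (T (delta y)) x \<noteq> 0 \<Longrightarrow> dist x y \<le> R"
    using assms unfolding finite_propagation_def by blast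
  show ?thesis by (rule that[of "max R 0"]) (use R in \<open>force simp: matrix_entry_def\<close>)+
qed

lemma matrix_entry_comp_finite:
  assumes a: "bounded_op a" and fin: "finite (ball x r)"
    and c: "\<And>y. matrix_entry c y x \<noteq> 0 \<Longrightarrow> dist y x < r"
  shows "matrix_entry (a \<circ> c) z x = (\<Sum>y\<in>ball x r. matrix_entry c y x * matrix_entry a z y)"
proof -
  have "Rep_ell2 (a (c (delta x))) z = (\<Sum>y\<in>ball x r. Rep_ell2 (c (delta x)) y * matrix_entry a z y)"
    by (rule Rep_bounded_op_finite_support[OF a fin]) (use c in \<open>auto simp: matrix_entry_def dist_commute\<close>)
  then show ?thesis by (simp add: matrix_entry_def)
qed

lemma fa_trace_comp_commute_finite_propagation:
  fixes a c :: "'a::metric_space op"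
  assumes \<mu>: "fin_add_measure \<mu>" and inv: "translation_invariant \<mu>"
    and a: "bounded_op a" and c: "bounded_op c"
    and a_prop: "\<And>x y. matrix_entry a x y \<noteq> 0 \<Longrightarrow> dist x y \<le> R"
    and c_prop: "\<And>x y. matrix_entry c x y \<noteq> 0 \<Longrightarrow> dist x y \<le> R"
    and fin: "\<And>x::'a. finite (ball x (R + 1))" and card: "\<And>x::'a. card (ball x (R + 1)) \<le> N"
  shows "fa_trace \<mu> (a \<circ> c) = fa_trace \<mu> (c \<circ> a)"
proof -
  obtain Ca where Ca: "Ca \<ge> 0" "\<And>f. ell2_norm (a f) \<le> Ca * ell2_norm f" using bounded_opE[OF a] by blast
  obtain Cc where Cc: "\<And>f. ell2_norm (c f) \<le> Cc * ell2_norm f" using bounded_opE[OF c] by blast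
  define K where "K = (\<lambda>x y. matrix_entry a x y * matrix_entry c y x)"
  have K: "cmod (K x y) \<le> Ca * Cc" for x y
    unfolding K_def norm_mult
    by (rule mult_mono[OF norm_matrix_entry_le[OF Ca(2)] norm_matrix_entry_le[OF Cc]]) (use Ca in auto)
  have "matrix_entry (a \<circ> c) x x = (\<Sum>y\<in>ball x (R + 1). K x y)" for x
    unfolding K_def using c_prop
    by (subst matrix_entry_comp_finite[OF a fin]) (force, simp add: mult.commute)
  moreover have "matrix_entry (c \<circ> a) y y = (\<Sum>x\<in>ball y (R + 1). K x y)" for y
    unfolding K_def using a_prop
    by (subst matrix_entry_comp_finite[OF c fin]) (force, simp add: mult.commute)
  ultimately show ?thesis
    unfolding fa_trace_def using fa_cintegral_sum_ball_swap[OF \<mu> inv fin card K] by simp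
qed

lemma ell2_norm_apply_delta_le:
  assumes c: "bounded_op c" and c': "bounded_op c'" and Cc: "\<And>f. ell2_norm (c f) \<le> Cc * ell2_norm f"
  shows "ell2_norm (c' (delta x)) \<le> Cc + op_dist c c'"
proof -
  let ?f = "Rep_ell2 (c (delta x))" and ?g = "\<lambda>y. Rep_ell2 (c (delta x)) y - Rep_ell2 (c' (delta x)) y"
  have "fnorm2 (\<lambda>y. ?f y - ?g y) \<le> fnorm2 ?f + fnorm2 ?g"
    by (rule fnorm2_diff_le) (simp_all add: square_summable_diff)
  moreover have "(\<lambda>y. ?f y - ?g y) = Rep_ell2 (c' (delta x))" by auto
  moreover have "fnorm2 ?f \<le> Cc" using Cc[of "delta x"] by (simp add: ell2_norm_def[symmetric])
  moreover have "fnorm2 ?g \<le> op_dist c c'" by (rule fnorm2_le_op_dist[OF c c' ell2_norm_delta[THEN eq_refl]])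
  ultimately show ?thesis by (simp add: ell2_norm_def)
qed

lemma norm_matrix_entry_comp_diff_le:
  assumes a: "bounded_op a" and a': "bounded_op a'" and c: "bounded_op c" and c': "bounded_op c'"
    and Ca: "Ca \<ge> 0" "\<And>f. ell2_norm (a f) \<le> Ca * ell2_norm f"
    and Cc: "\<And>f. ell2_norm (c f) \<le> Cc * ell2_norm f"
  shows "cmod (matrix_entry (a \<circ> c) x x - matrix_entry (a' \<circ> c') x x)
    \<le> Ca * op_dist c c' + op_dist a a' * (Cc + op_dist c c')"
proof -
  define w where "w = Abs_ell2 (\<lambda>y. Rep_ell2 (c (delta x)) y - Rep_ell2 (c' (delta x)) y)"
  have Rep_w: "Rep_ell2 w = (\<lambda>y. Rep_ell2 (c (delta x)) y - Rep_ell2 (c' (delta x)) y)"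
    unfolding w_def
    by (rule Rep_ell2_Abs_ell2[OF square_summable_diff[OF square_summable_Rep_ell2 square_summable_Rep_ell2]])
  have "Rep_ell2 (a (c (delta x))) x - Rep_ell2 (a (c' (delta x))) x = Rep_ell2 (a w) x"
    by (rule bounded_op_diff[OF a, symmetric]) (simp add: Rep_w)
  also have "cmod \<dots> \<le> Ca * ell2_norm w" using norm_Rep_ell2_le[of "a w" x] Ca(2)[of w] by simp
  also have "\<dots> \<le> Ca * op_dist c c'"
    using fnorm2_le_op_dist[OF c c' ell2_norm_delta[THEN eq_refl], of x]
    by (intro mult_left_mono[OF _ Ca(1)]) (simp add: ell2_norm_def Rep_w)
  finally have c_part: "cmod (Rep_ell2 (a (c (delta x))) x - Rep_ell2 (a (c' (delta x))) x) \<le> Ca * op_dist c c'" .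
  have "cmod (Rep_ell2 (a (c' (delta x))) x - Rep_ell2 (a' (c' (delta x))) x)
      \<le> fnorm2 (\<lambda>y. Rep_ell2 (a (c' (delta x))) y - Rep_ell2 (a' (c' (delta x))) y)"
    by (rule norm_le_fnorm2[OF square_summable_diff[OF square_summable_Rep_ell2 square_summable_Rep_ell2]])
  also have "\<dots> \<le> op_dist a a' * ell2_norm (c' (delta x))" by (rule fnorm2_le_op_dist_mult[OF a a'])
  also have "\<dots> \<le> op_dist a a' * (Cc + op_dist c c')"
    by (rule mult_left_mono[OF ell2_norm_apply_delta_le[OF c c' Cc] op_dist_nonneg[OF a a']])
  finally have a_part: "cmod (Rep_ell2 (a (c' (delta x))) x - Rep_ell2 (a' (c' (delta x))) x)
      \<le> op_dist a a' * (Cc + op_dist c c')" .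
  show ?thesis
    using norm_triangle_ineq[of "Rep_ell2 (a (c (delta x))) x - Rep_ell2 (a (c' (delta x))) x"
        "Rep_ell2 (a (c' (delta x))) x - Rep_ell2 (a' (c' (delta x))) x"] c_part a_part
    by (simp add: matrix_entry_def)
qed

lemma norm_fa_trace_comp_diff_le:
  assumes \<mu>: "fin_add_measure \<mu>"
    and a: "bounded_op a" and a': "bounded_op a'" and c: "bounded_op c" and c': "bounded_op c'"
    and Ca: "Ca \<ge> 0" "\<And>f. ell2_norm (a f) \<le> Ca * ell2_norm f"
    and Cc: "Cc \<ge> 0" "\<And>f. ell2_norm (c f) \<le> Cc * ell2_norm f"
    and d: "d \<le> 1" "op_dist a a' \<le> d" "op_dist c c' \<le> d"
  shows "cmod (fa_trace \<mu> (a \<circ> c) - fa_trace \<mu> (a' \<circ> c')) \<le> 2 * ((Ca + Cc + 1) * d) * \<mu> UNIV"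
proof -
  have "Ca * op_dist c c' + op_dist a a' * (Cc + op_dist c c') \<le> Ca * d + d * (Cc + 1)"
    using d Ca(1) Cc(1) op_dist_nonneg[OF a a'] op_dist_nonneg[OF c c']
    by (intro add_mono mult_mono) auto
  then have "cmod (matrix_entry (a \<circ> c) x x - matrix_entry (a' \<circ> c') x x) \<le> (Ca + Cc + 1) * d" for x
    using norm_matrix_entry_comp_diff_le[OF a a' c c' Ca Cc(2), of x] by (simp add: algebra_simps)
  then show ?thesis
    unfolding fa_trace_def
    by (rule norm_fa_cintegral_diff_le[OF \<mu> bounded_fun_diagonal[OF bounded_op_comp[OF a c]]
          bounded_fun_diagonal[OF bounded_op_comp[OF a' c']]])
qed

lemma ulfE:
  assumes "ulf TYPE('a::metric_space)" "r > 0"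
  obtains N where "\<And>x::'a. finite (ball x r)" "\<And>x::'a. card (ball x r) \<le> N"
  using assms unfolding ulf_def by blast

lemma finite_propagation_approx_commute:
  fixes a c :: "'a::metric_space op"
  assumes \<mu>: "fin_add_measure \<mu>" and inv: "translation_invariant \<mu>" and ulf: "ulf TYPE('a)"
    and a: "a \<in> uniform_roe" and c: "c \<in> uniform_roe" and d: "d > 0"
  obtains a' c' where "bounded_op a'" "bounded_op c'" "op_dist a a' < d" "op_dist c c' < d"
    "fa_trace \<mu> (a' \<circ> c') = fa_trace \<mu> (c' \<circ> a')"
proof -
  obtain a' where a': "bounded_op a'" "finite_propagation a'" "op_dist a a' < d"
    using uniform_roe_approx[OF a d] by blast
  obtain c' where c': "bounded_op c'" "finite_propagation c'" "op_dist c c' < d"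
    using uniform_roe_approx[OF c d] by blast
  obtain Ra where Ra: "Ra \<ge> 0" "\<forall>x y. matrix_entry a' x y \<noteq> 0 \<longrightarrow> dist x y \<le> Ra"
    using a'(2) by (rule finite_propagationE)
  obtain Rc where Rc: "Rc \<ge> 0" "\<forall>x y. matrix_entry c' x y \<noteq> 0 \<longrightarrow> dist x y \<le> Rc"
    using c'(2) by (rule finite_propagationE)
  define R where "R = max Ra Rc"
  have "R + 1 > 0" using Ra(1) unfolding R_def by simp
  with ulf obtain N where N: "\<And>x::'a. finite (ball x (R + 1))" "\<And>x::'a. card (ball x (R + 1)) \<le> N"
    by (rule ulfE) auto
  have "matrix_entry a' x y \<noteq> 0 \<Longrightarrow> dist x y \<le> R" "matrix_entry c' x y \<noteq> 0 \<Longrightarrow> dist x y \<le> R" for x y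
    using Ra(2) Rc(2) unfolding R_def by fastforce+
  then have "fa_trace \<mu> (a' \<circ> c') = fa_trace \<mu> (c' \<circ> a')"
    by (intro fa_trace_comp_commute_finite_propagation[OF \<mu> inv a'(1) c'(1) _ _ N])
  with a' c' show ?thesis using that by blast
qed

lemma fa_trace_comp_commute:
  fixes a c :: "'a::metric_space op"
  assumes \<mu>: "fin_add_measure \<mu>" and inv: "translation_invariant \<mu>" and ulf: "ulf TYPE('a)"
    and a: "a \<in> uniform_roe" and c: "c \<in> uniform_roe"
  shows "fa_trace \<mu> (a \<circ> c) = fa_trace \<mu> (c \<circ> a)"
proof -
  have ba: "bounded_op a" and bc: "bounded_op c" using a c by (auto intro: uniform_roe_bounded_op)
  obtain Ca where Ca: "Ca \<ge> 0" "\<And>f. ell2_norm (a f) \<le> Ca * ell2_norm f" using bounded_opE[OF ba] by blast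
  obtain Cc where Cc: "Cc \<ge> 0" "\<And>f. ell2_norm (c f) \<le> Cc * ell2_norm f" using bounded_opE[OF bc] by blast
  have \<mu>_UNIV: "0 \<le> \<mu> UNIV" by (rule fin_add_measure_nonneg[OF \<mu>])
  have "fa_trace \<mu> (a \<circ> c) - fa_trace \<mu> (c \<circ> a) = 0"
  proof (rule zero_if_norm_le_eps)
    fix e :: real assume e: "e > 0"
    define d where "d = min 1 e"
    have d: "d > 0" "d \<le> 1" "d \<le> e" unfolding d_def using e by auto
    obtain a' c' where a'c': "bounded_op a'" "bounded_op c'" "op_dist a a' < d" "op_dist c c' < d"
      and commute: "fa_trace \<mu> (a' \<circ> c') = fa_trace \<mu> (c' \<circ> a')"
      using finite_propagation_approx_commute[OF \<mu> inv ulf a c d(1)] by blast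
    have "fa_trace \<mu> (a \<circ> c) - fa_trace \<mu> (c \<circ> a)
        = (fa_trace \<mu> (a \<circ> c) - fa_trace \<mu> (a' \<circ> c')) - (fa_trace \<mu> (c \<circ> a) - fa_trace \<mu> (c' \<circ> a'))"
      using commute by simp
    then have "cmod (fa_trace \<mu> (a \<circ> c) - fa_trace \<mu> (c \<circ> a))
        \<le> cmod (fa_trace \<mu> (a \<circ> c) - fa_trace \<mu> (a' \<circ> c')) + cmod (fa_trace \<mu> (c \<circ> a) - fa_trace \<mu> (c' \<circ> a'))"
      by (metis norm_triangle_ineq4)
    also have "\<dots> \<le> 2 * ((Ca + Cc + 1) * d) * \<mu> UNIV + 2 * ((Cc + Ca + 1) * d) * \<mu> UNIV"
      using a'c'(3,4)
      by (intro add_mono norm_fa_trace_comp_diff_le[OF \<mu> ba a'c'(1) bc a'c'(2) Ca Cc d(2)]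
          norm_fa_trace_comp_diff_le[OF \<mu> bc a'c'(2) ba a'c'(1) Cc Ca d(2)]) auto
    also have "\<dots> = (4 * (Ca + Cc + 1) * \<mu> UNIV) * d" by (simp add: algebra_simps)
    also have "\<dots> \<le> (4 * (Ca + Cc + 1) * \<mu> UNIV) * e"
      using d(3) Ca(1) Cc(1) \<mu>_UNIV by (intro mult_left_mono) auto
    finally show "norm (fa_trace \<mu> (a \<circ> c) - fa_trace \<mu> (c \<circ> a)) \<le> (4 * (Ca + Cc + 1) * \<mu> UNIV) * e" .
  qed (use Ca(1) Cc(1) \<mu>_UNIV in simp)
  then show ?thesis by simp
qed

section \<open>The dynamics and its analytic extensions\<close>

lemma bounded_range_absE:
  fixes h :: "'a \<Rightarrow> real"
  assumes "bounded (range h)"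
  obtains M where "M \<ge> 0" "\<And>x. \<bar>h x\<bar> \<le> M"
proof -
  obtain M where M: "\<And>x. norm (h x) \<le> M" using assms unfolding bounded_iff by blast
  have "0 \<le> M" by (rule order_trans[OF norm_ge_zero M])
  then show ?thesis by (rule that) (use M in simp)
qed

lemma norm_exp_mult_le:
  assumes "\<And>x. \<bar>h x\<bar> \<le> M"
  shows "cmod (exp (\<i> * z * of_real (h x))) \<le> exp (cmod z * M)"
proof -
  have "Re (\<i> * z * of_real (h x)) = - Im z * h x" by simp
  also have "\<dots> \<le> \<bar>Im z\<bar> * \<bar>h x\<bar>" by (simp add: abs_mult[symmetric] abs_le_iff)
  also have "\<dots> \<le> cmod z * M"
    using assms[of x] abs_Im_le_cmod[of z] by (intro mult_mono) auto
  finally show ?thesis by simp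
qed

lemma exp_mult_bounded:
  fixes h :: "'a \<Rightarrow> real"
  assumes "\<And>x. \<bar>h x\<bar> \<le> M"
  shows "exp (- (\<bar>\<beta>\<bar> * M)) \<le> exp (\<beta> * h x)" "exp (\<beta> * h x) \<le> exp (\<bar>\<beta>\<bar> * M)"
proof -
  have "\<bar>\<beta>\<bar> * \<bar>h x\<bar> \<le> \<bar>\<beta>\<bar> * M" by (rule mult_left_mono) (use assms in auto)
  then have "\<bar>\<beta> * h x\<bar> \<le> \<bar>\<beta>\<bar> * M" by (simp add: abs_mult)
  then show "exp (- (\<bar>\<beta>\<bar> * M)) \<le> exp (\<beta> * h x)" "exp (\<beta> * h x) \<le> exp (\<bar>\<beta>\<bar> * M)"
    by (simp_all add: abs_le_iff)
qed

text \<open>\<open>exp_op h z\<close> is \<open>exp (i z h)\<close>, so \<open>\<sigma>\<^sub>h\<^sub>,\<^sub>t(b) = exp (i t h) b exp (-i t h)\<close> for real \<open>t\<close>,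
  and \<open>exp_op h (i \<beta>)\<close> is multiplication by \<open>exp (-\<beta> h)\<close>.\<close>

definition exp_op :: "('a \<Rightarrow> real) \<Rightarrow> complex \<Rightarrow> 'a op" where
  "exp_op h z = mult_op (\<lambda>x. exp (\<i> * z * of_real (h x)))"

lemma bounded_op_exp_op: "bounded (range h) \<Longrightarrow> bounded_op (exp_op h z)"
  unfolding exp_op_def by (elim bounded_range_absE, rule bounded_op_mult_op, rule norm_exp_mult_le)

lemma Rep_exp_op:
  "bounded (range h) \<Longrightarrow> Rep_ell2 (exp_op h z f) y = exp (\<i> * z * of_real (h y)) * Rep_ell2 f y"
  unfolding exp_op_def by (elim bounded_range_absE, rule Rep_mult_op, rule norm_exp_mult_le)

lemma matrix_entry_exp_op_comp:
  assumes "bounded (range h)"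
  shows "matrix_entry (exp_op h w \<circ> X) x y = exp (\<i> * w * of_real (h x)) * matrix_entry X x y"
  by (simp add: matrix_entry_def Rep_exp_op[OF assms])

lemma matrix_entry_comp_exp_op:
  assumes h: "bounded (range h)" and X: "bounded_op X"
  shows "matrix_entry (X \<circ> exp_op h w) x y = exp (\<i> * w * of_real (h y)) * matrix_entry X x y"
  unfolding matrix_entry_def comp_def
  by (rule bounded_op_scale[OF X]) (simp add: Rep_exp_op[OF h] Rep_delta)

lemma sigma_eq_exp_op: "sigma h t b = exp_op h (of_real t) \<circ> b \<circ> exp_op h (- of_real t)"
  unfolding sigma_def exp_op_def by (simp add: mult.assoc)

lemma exp_op_neg_comp_exp_op:
  assumes "bounded (range h)"
  shows "exp_op h (- w) \<circ> (exp_op h w \<circ> Y) = Y"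
  by (rule op_eqI) (simp add: Rep_exp_op[OF assms] mult.assoc[symmetric] exp_add[symmetric])

lemma fnorm2_difference_quotient_bounded:
  assumes P: "bounded_op P" and Q: "bounded_op Q" and D: "bounded_op D"
  obtains B where
    "\<And>f. ell2_norm f \<le> 1 \<Longrightarrow> fnorm2 (\<lambda>x. (Rep_ell2 (P f) x - Rep_ell2 (Q f) x) / s - Rep_ell2 (D f) x) \<le> B"
    "\<And>f. square_summable (\<lambda>x. (Rep_ell2 (P f) x - Rep_ell2 (Q f) x) / s - Rep_ell2 (D f) x)"
proof -
  obtain CPQ where CPQ: "\<And>f. ell2_norm f \<le> 1 \<Longrightarrow> fnorm2 (\<lambda>x. Rep_ell2 (P f) x - Rep_ell2 (Q f) x) \<le> CPQ"
    using fnorm2_bounded_op_diff_le[OF P Q] by blast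
  obtain CD where CD: "CD \<ge> 0" "\<And>f. ell2_norm (D f) \<le> CD * ell2_norm f" using bounded_opE[OF D] by blast
  have eq: "(\<lambda>x. (Rep_ell2 (P f) x - Rep_ell2 (Q f) x) / s - Rep_ell2 (D f) x)
      = (\<lambda>x. inverse s * (Rep_ell2 (P f) x - Rep_ell2 (Q f) x) - Rep_ell2 (D f) x)" for f
    by (simp add: divide_inverse mult.commute)
  have summable: "square_summable (\<lambda>x. (Rep_ell2 (P f) x - Rep_ell2 (Q f) x) / s - Rep_ell2 (D f) x)" for f
    unfolding eq by (intro square_summable_diff square_summable_scale) simp_all
  have "fnorm2 (\<lambda>x. (Rep_ell2 (P f) x - Rep_ell2 (Q f) x) / s - Rep_ell2 (D f) x) \<le> cmod (inverse s) * CPQ + CD"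
    if f: "ell2_norm f \<le> 1" for f
  proof -
    have "fnorm2 (\<lambda>x. (Rep_ell2 (P f) x - Rep_ell2 (Q f) x) / s - Rep_ell2 (D f) x)
        \<le> cmod (inverse s) * fnorm2 (\<lambda>x. Rep_ell2 (P f) x - Rep_ell2 (Q f) x) + fnorm2 (Rep_ell2 (D f))"
      unfolding eq
      using fnorm2_diff_le[OF square_summable_scale[OF square_summable_diff] square_summable_Rep_ell2]
        fnorm2_scale[OF square_summable_diff]
      by (metis square_summable_Rep_ell2)
    moreover have "cmod (inverse s) * fnorm2 (\<lambda>x. Rep_ell2 (P f) x - Rep_ell2 (Q f) x) \<le> cmod (inverse s) * CPQ"
      by (rule mult_left_mono[OF CPQ[OF f] norm_ge_zero])
    moreover have "fnorm2 (Rep_ell2 (D f)) \<le> CD"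
      using CD(2)[of f] f CD(1) mult_left_le[of "ell2_norm f" CD] by (simp add: ell2_norm_def)
    ultimately show ?thesis by linarith
  qed
  then show ?thesis using that summable by blast
qed

lemma holomorphic_matrix_entry:
  assumes F: "entire_op F"
  shows "(\<lambda>z. matrix_entry (F z) x y) holomorphic_on UNIV"
  unfolding holomorphic_on_open[OF open_UNIV]
proof
  fix z :: complex
  obtain D where D: "bounded_op D"
    and lim: "((\<lambda>w. comb_norm (\<lambda>f x. (Rep_ell2 (F w f) x - Rep_ell2 (F z f) x) / (w - z) - Rep_ell2 (D f) x)) \<longlongrightarrow> 0) (at z)"
    using F unfolding entire_op_def by blast
  have bF: "bounded_op (F w)" for w using F unfolding entire_op_def by (auto intro: uniform_roe_bounded_op)
  have "norm ((matrix_entry (F w) x y - matrix_entry (F z) x y) / (w - z) - matrix_entry D x y)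
      \<le> comb_norm (\<lambda>f x. (Rep_ell2 (F w f) x - Rep_ell2 (F z f) x) / (w - z) - Rep_ell2 (D f) x)" for w
  proof -
    obtain B where B: "\<And>f. ell2_norm f \<le> 1 \<Longrightarrow>
        fnorm2 (\<lambda>x. (Rep_ell2 (F w f) x - Rep_ell2 (F z f) x) / (w - z) - Rep_ell2 (D f) x) \<le> B"
      and summable: "\<And>f. square_summable (\<lambda>x. (Rep_ell2 (F w f) x - Rep_ell2 (F z f) x) / (w - z) - Rep_ell2 (D f) x)"
      using fnorm2_difference_quotient_bounded[OF bF bF D] by blast
    have "norm ((matrix_entry (F w) x y - matrix_entry (F z) x y) / (w - z) - matrix_entry D x y)
        \<le> fnorm2 (\<lambda>x. (Rep_ell2 (F w (delta y)) x - Rep_ell2 (F z (delta y)) x) / (w - z) - Rep_ell2 (D (delta y)) x)"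
      using norm_le_fnorm2[OF summable[of "delta y"], of x] by (simp add: matrix_entry_def)
    also have "\<dots> \<le> comb_norm (\<lambda>f x. (Rep_ell2 (F w f) x - Rep_ell2 (F z f) x) / (w - z) - Rep_ell2 (D f) x)"
      by (rule le_comb_norm[OF B]) simp_all
    finally show ?thesis .
  qed
  then have "((\<lambda>w. (matrix_entry (F w) x y - matrix_entry (F z) x y) / (w - z) - matrix_entry D x y) \<longlongrightarrow> 0) (at z)"
    by (intro Lim_null_comparison[OF always_eventually lim]) blast
  then have "((\<lambda>z. matrix_entry (F z) x y) has_field_derivative matrix_entry D x y) (at z)"
    by (simp add: has_field_derivative_iff LIM_zero_cancel)
  thus "\<exists>f'. ((\<lambda>z. matrix_entry (F z) x y) has_field_derivative f') (at z)" by blast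
qed

lemma islimpt_Reals_0: "(0::complex) islimpt \<real>"
  unfolding islimpt_approachable
proof (intro allI impI)
  fix e :: real assume "e > 0"
  then show "\<exists>x'\<in>\<real>. x' \<noteq> 0 \<and> dist x' (0::complex) < e"
    by (intro bexI[where x = "of_real (e / 2)"]) auto
qed

text \<open>By the identity theorem, an analytic extension is determined by its values on the real axis.\<close>

lemma analytic_ext_eq_exp_op:
  assumes h: "bounded (range h)" and b: "bounded_op b" and F: "analytic_ext h b F"
  shows "F z = exp_op h z \<circ> b \<circ> exp_op h (- z)"
proof (rule bounded_op_eqI)
  have E: "entire_op F" and R: "\<And>t. F (of_real t) = sigma h t b" using F unfolding analytic_ext_def by auto
  show "bounded_op (F z)" using E unfolding entire_op_def by (auto intro: uniform_roe_bounded_op)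
  show "bounded_op (exp_op h z \<circ> b \<circ> exp_op h (- z))" by (intro bounded_op_comp bounded_op_exp_op[OF h] b)
  have conj: "matrix_entry (exp_op h w \<circ> b \<circ> exp_op h (- w)) x y
      = exp (\<i> * w * of_real (h x)) * matrix_entry b x y * exp (\<i> * (- w) * of_real (h y))" for w x y
    using matrix_entry_comp_exp_op[OF h bounded_op_comp[OF bounded_op_exp_op[OF h] b]]
      matrix_entry_exp_op_comp[OF h]
    by (simp add: o_assoc)
  fix x y
  let ?q = "\<lambda>w. matrix_entry (exp_op h w \<circ> b \<circ> exp_op h (- w)) x y"
  have "matrix_entry (F z) x y - ?q z = 0"
  proof (rule analytic_continuation[of "\<lambda>w. matrix_entry (F w) x y - ?q w" UNIV \<real> 0 z])
    show "(\<lambda>w. matrix_entry (F w) x y - ?q w) holomorphic_on UNIV"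
      unfolding conj by (intro holomorphic_intros holomorphic_matrix_entry[OF E])
    show "(0::complex) islimpt \<real>" by (rule islimpt_Reals_0)
    fix w :: complex assume "w \<in> \<real>"
    then obtain t where "w = of_real t" by (auto elim: Reals_cases)
    then show "matrix_entry (F w) x y - ?q w = 0" by (simp add: R sigma_eq_exp_op)
  qed auto
  then show "matrix_entry (F z) x y = ?q z" by simp
qed

section \<open>From an invariant mean to a KMS state\<close>

lemma fa_trace_comp_exp_op_swap:
  assumes "bounded (range h)" and "bounded_op X"
  shows "fa_trace \<mu> (X \<circ> exp_op h w) = fa_trace \<mu> (exp_op h w \<circ> X)"
  unfolding fa_trace_def by (simp add: matrix_entry_comp_exp_op[OF assms] matrix_entry_exp_op_comp[OF assms(1)])

lemma exp_i_mult_i_real: "exp (\<i> * (\<i> * of_real \<beta>) * of_real r) = of_real (exp (- (\<beta> * r)))"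
proof -
  have "\<i> * (\<i> * of_real \<beta>) * of_real r = of_real (- (\<beta> * r))" by (simp add: mult.assoc[symmetric])
  then show ?thesis by (simp only: exp_of_real)
qed

lemma matrix_entry_exp_op_i_real_comp:
  assumes "bounded (range h)"
  shows "matrix_entry (exp_op h (\<i> * of_real \<beta>) \<circ> X) x y = of_real (exp (- (\<beta> * h x))) * matrix_entry X x y"
  unfolding matrix_entry_exp_op_comp[OF assms] exp_i_mult_i_real ..

lemma fa_trace_exp_op_i_real_pos:
  assumes \<mu>: "fin_add_measure \<mu>" "\<mu> UNIV > 0" and h: "bounded (range h)"
  obtains r where "r > 0" "fa_trace \<mu> (exp_op h (\<i> * of_real \<beta>)) = of_real r"
proof -
  obtain M where M: "\<And>x. \<bar>h x\<bar> \<le> M" using bounded_range_absE[OF h] by blast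
  have diagonal: "matrix_entry (exp_op h (\<i> * of_real \<beta>)) x x = of_real (exp (- (\<beta> * h x)))" for x
    using matrix_entry_exp_op_i_real_comp[OF h, where \<beta> = \<beta> and X = id and x = x and y = x]
    by (simp add: matrix_entry_def Rep_delta)
  have "exp (- (\<bar>\<beta>\<bar> * M)) \<le> exp (- (\<beta> * h x))" for x
    using exp_mult_bounded(1)[of h M "- \<beta>" x, OF M] by simp
  then have ge: "exp (- (\<bar>\<beta>\<bar> * M)) \<le> Re (matrix_entry (exp_op h (\<i> * of_real \<beta>)) x x)" for x
    by (simp add: diagonal)
  have real: "matrix_entry (exp_op h (\<i> * of_real \<beta>)) x x \<in> \<real>" for x
    by (simp add: diagonal)
  note trace_real_ge = fa_cintegral_real_ge[OF \<mu>(1) bounded_fun_diagonal[OF bounded_op_exp_op[OF h]] real ge]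
  then have "fa_trace \<mu> (exp_op h (\<i> * of_real \<beta>)) \<in> \<real>"
    "exp (- (\<bar>\<beta>\<bar> * M)) * \<mu> UNIV \<le> Re (fa_trace \<mu> (exp_op h (\<i> * of_real \<beta>)))"
    unfolding fa_trace_def by simp_all
  moreover have "0 < exp (- (\<bar>\<beta>\<bar> * M)) * \<mu> UNIV" using \<mu>(2) by simp
  ultimately show ?thesis using that by (metis Re_complex_of_real Reals_cases order_less_le_trans)
qed

definition gibbs_state :: "('a::metric_space set \<Rightarrow> real) \<Rightarrow> ('a \<Rightarrow> real) \<Rightarrow> real \<Rightarrow> 'a op \<Rightarrow> complex" where
  "gibbs_state \<mu> h \<beta> X
    = fa_trace \<mu> (exp_op h (\<i> * of_real \<beta>) \<circ> X) / fa_trace \<mu> (exp_op h (\<i> * of_real \<beta>))"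

lemma is_state_gibbs_state:
  fixes h :: "'a::metric_space \<Rightarrow> real"
  assumes \<mu>: "fin_add_measure \<mu>" "\<mu> UNIV > 0" and h: "bounded (range h)"
  shows "is_state (gibbs_state \<mu> h \<beta>)"
proof -
  let ?k = "exp_op h (\<i> * of_real \<beta>)"
  obtain r where r: "r > 0" "fa_trace \<mu> ?k = of_real r"
    using fa_trace_exp_op_i_real_pos[OF \<mu> h] by blast
  have diagonal: "bounded_fun (\<lambda>x. matrix_entry (?k \<circ> a) x x)" if "a \<in> uniform_roe" for a
    by (intro bounded_fun_diagonal bounded_op_comp bounded_op_exp_op[OF h] uniform_roe_bounded_op that)
  have "gibbs_state \<mu> h \<beta> (op_add a (op_scale c b)) = gibbs_state \<mu> h \<beta> a + c * gibbs_state \<mu> h \<beta> b"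
    if a: "a \<in> uniform_roe" and b: "b \<in> uniform_roe" for a b :: "'a op" and c
  proof -
    have "(\<lambda>x. matrix_entry (?k \<circ> op_add a (op_scale c b)) x x)
        = (\<lambda>x. matrix_entry (?k \<circ> a) x x + c * matrix_entry (?k \<circ> b) x x)"
      by (simp add: matrix_entry_exp_op_comp[OF h], simp add: matrix_entry_def Rep_op_add_scale algebra_simps)
    then have "fa_trace \<mu> (?k \<circ> op_add a (op_scale c b)) = fa_trace \<mu> (?k \<circ> a) + c * fa_trace \<mu> (?k \<circ> b)"
      unfolding fa_trace_def
      using fa_cintegral_add[OF \<mu>(1) diagonal[OF a] bounded_fun_mult_left[OF diagonal[OF b]]]
        fa_cintegral_scale[OF \<mu>(1) diagonal[OF b]]
      by simp
    then show ?thesis unfolding gibbs_state_def by (simp add: add_divide_distrib)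
  qed
  moreover have "gibbs_state \<mu> h \<beta> a \<in> \<real> \<and> 0 \<le> Re (gibbs_state \<mu> h \<beta> a)"
    if a: "a \<in> uniform_roe" and "positive_op a" for a
  proof -
    have "matrix_entry a x x \<in> \<real>" "0 \<le> Re (matrix_entry a x x)" for x
      using \<open>positive_op a\<close> unfolding positive_op_def ell2_inner_delta_apply[symmetric] by auto
    then have "matrix_entry (?k \<circ> a) x x \<in> \<real>" "0 \<le> Re (matrix_entry (?k \<circ> a) x x)" for x
      by (auto simp: matrix_entry_exp_op_i_real_comp[OF h] elim!: Reals_cases)
    then have "fa_trace \<mu> (?k \<circ> a) \<in> \<real>" "0 \<le> Re (fa_trace \<mu> (?k \<circ> a))"
      unfolding fa_trace_def using fa_cintegral_real_ge[OF \<mu>(1) diagonal[OF a], of 0] by auto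
    then show ?thesis unfolding gibbs_state_def r(2) using r(1) by (auto elim!: Reals_cases)
  qed
  moreover have "gibbs_state \<mu> h \<beta> id = 1"
    unfolding gibbs_state_def using r by simp
  ultimately show ?thesis unfolding is_state_def by blast
qed

text \<open>With \<open>k = exp (-\<beta> h)\<close>, the analytic extension gives \<open>k a \<sigma>\<^sub>i\<^sub>\<beta>(b) = (k a k b) k\<^sup>-\<^sup>1\<close>,
  so the KMS condition follows from the trace property of \<open>fa_trace\<close>.\<close>

lemma gibbs_state_kms:
  fixes h :: "'a::metric_space \<Rightarrow> real"
  assumes \<mu>: "fin_add_measure \<mu>" and inv: "translation_invariant \<mu>" and ulf: "ulf TYPE('a)"
    and h: "bounded (range h)"
    and a: "a \<in> uniform_roe" and b: "b \<in> uniform_roe" and F: "analytic_ext h b F"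
  shows "gibbs_state \<mu> h \<beta> (a \<circ> F (\<i> * of_real \<beta>)) = gibbs_state \<mu> h \<beta> (b \<circ> a)"
proof -
  let ?z = "\<i> * of_real \<beta>"
  let ?k = "exp_op h ?z"
  obtain M where M: "\<And>x. \<bar>h x\<bar> \<le> M" using bounded_range_absE[OF h] by blast
  have kb: "?k \<circ> b \<in> uniform_roe"
    unfolding exp_op_def by (rule mult_op_comp_in_uniform_roe[OF b norm_exp_mult_le[OF M]])
  have "fa_trace \<mu> (?k \<circ> (a \<circ> F ?z)) = fa_trace \<mu> ((?k \<circ> a \<circ> ?k \<circ> b) \<circ> exp_op h (- ?z))"
    unfolding analytic_ext_eq_exp_op[OF h uniform_roe_bounded_op[OF b] F] by (simp add: o_assoc)
  also have "\<dots> = fa_trace \<mu> (exp_op h (- ?z) \<circ> (?k \<circ> a \<circ> ?k \<circ> b))"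
    using a b by (intro fa_trace_comp_exp_op_swap[OF h] bounded_op_comp bounded_op_exp_op[OF h] uniform_roe_bounded_op)
  also have "\<dots> = fa_trace \<mu> (a \<circ> (?k \<circ> b))"
    using exp_op_neg_comp_exp_op[OF h, of ?z "a \<circ> (?k \<circ> b)"] by (simp add: o_assoc)
  also have "\<dots> = fa_trace \<mu> ((?k \<circ> b) \<circ> a)" by (rule fa_trace_comp_commute[OF \<mu> inv ulf a kb])
  finally show ?thesis unfolding gibbs_state_def by (simp add: o_assoc)
qed

lemma amenableE:
  assumes "amenable TYPE('a)"
  obtains \<mu> :: "'a::metric_space set \<Rightarrow> real"
  where "fin_add_measure \<mu>" "translation_invariant \<mu>" "\<mu> UNIV > 0"
proof -
  obtain \<mu> :: "'a set \<Rightarrow> real" where nonneg: "\<forall>A. 0 \<le> \<mu> A" and nonzero: "\<exists>A. \<mu> A \<noteq> 0"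
    and add: "\<forall>A B. A \<inter> B = {} \<longrightarrow> \<mu> (A \<union> B) = \<mu> A + \<mu> B"
    and inv: "\<forall>f A B. partial_translation f A B \<longrightarrow> \<mu> A = \<mu> B"
    using assms unfolding amenable_def by blast
  have \<mu>: "fin_add_measure \<mu>" unfolding fin_add_measure_def using nonneg add by blast
  obtain A where "\<mu> A \<noteq> 0" using nonzero by blast
  moreover have "0 \<le> \<mu> A" "\<mu> A \<le> \<mu> UNIV" using nonneg fin_add_measure_mono[OF \<mu>, of A UNIV] by auto
  ultimately have "\<mu> UNIV > 0" by linarith
  with \<mu> inv show ?thesis using that unfolding translation_invariant_def by blast
qed

lemma kms_state_gibbs_state:
  fixes h :: "'a::metric_space \<Rightarrow> real"
  assumes "fin_add_measure \<mu>" "translation_invariant \<mu>" "\<mu> UNIV > 0"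
    and "ulf TYPE('a)" and "bounded (range h)"
  shows "kms_state h \<beta> (gibbs_state \<mu> h \<beta>)"
  unfolding kms_state_def
  using is_state_gibbs_state[OF assms(1,3,5)] gibbs_state_kms[OF assms(1,2,4,5)] by blast

section \<open>From a KMS state to an invariant mean\<close>

lemma exp_remainder_small:
  assumes "e > 0"
  obtains s where "s > 0" "\<And>d::complex. d \<noteq> 0 \<Longrightarrow> cmod d < s \<Longrightarrow> cmod ((exp d - 1 - d) / d) \<le> e"
proof -
  have "((\<lambda>d. (exp d - exp 0) / (d - 0)) \<longlongrightarrow> exp (0::complex)) (at 0)"
    using DERIV_exp[of "0::complex"] unfolding has_field_derivative_iff .
  then have "((\<lambda>d. (exp d - 1) / d - 1) \<longlongrightarrow> (0::complex)) (at 0)"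
    using tendsto_diff[of "\<lambda>d. (exp d - 1) / d" 1 "at 0" "\<lambda>_. 1" 1] by simp
  then obtain s where s: "s > 0" "\<And>d::complex. d \<noteq> 0 \<and> norm (d - 0) < s \<longrightarrow> norm ((exp d - 1) / d - 1 - 0) < e"
    using assms unfolding LIM_eq by blast
  have "(exp d - 1 - d) / d = (exp d - 1) / d - 1" if "d \<noteq> 0" for d :: complex
    using that by (simp add: diff_divide_distrib)
  then show ?thesis using that[OF s(1)] s(2) by (simp add: less_imp_le)
qed

lemma norm_exp_difference_quotient_le:
  fixes c :: real and w z :: complex
  assumes cK: "\<bar>c\<bar> \<le> K" and wz: "w \<noteq> z" and small: "K * cmod (w - z) < s"
    and remainder: "\<And>d::complex. d \<noteq> 0 \<Longrightarrow> cmod d < s \<Longrightarrow> cmod ((exp d - 1 - d) / d) \<le> e"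
    and e: "e \<ge> 0"
  shows "cmod ((exp (\<i> * w * of_real c) - exp (\<i> * z * of_real c)) / (w - z)
              - \<i> * of_real c * exp (\<i> * z * of_real c)) \<le> exp (cmod z * K) * K * e"
proof (cases "c = 0")
  case True
  then show ?thesis using cK e by simp
next
  case False
  define d where "d = \<i> * of_real c * (w - z)"
  have d0: "d \<noteq> 0" using False wz unfolding d_def by simp
  have "cmod d = \<bar>c\<bar> * cmod (w - z)" unfolding d_def by (simp add: norm_mult)
  also have "\<dots> \<le> K * cmod (w - z)" using cK by (simp add: mult_right_mono)
  finally have ds: "cmod d < s" using small by linarith
  have "exp (\<i> * w * of_real c) = exp (\<i> * z * of_real c) * exp d"
    unfolding d_def exp_add[symmetric] by (simp add: algebra_simps)
  then have "(exp (\<i> * w * of_real c) - exp (\<i> * z * of_real c)) / (w - z) - \<i> * of_real c * exp (\<i> * z * of_real c)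
      = exp (\<i> * z * of_real c) * (\<i> * of_real c) * ((exp d - 1 - d) / d)"
    using d0 wz unfolding d_def by (simp add: field_simps)
  also have "cmod \<dots> = cmod (exp (\<i> * z * of_real c)) * \<bar>c\<bar> * cmod ((exp d - 1 - d) / d)"
    unfolding norm_mult[of _ "(exp d - 1 - d) / d"] by (simp add: norm_mult)
  also have "\<dots> \<le> exp (cmod z * K) * K * e"
  proof (intro mult_mono)
    show "cmod (exp (\<i> * z * of_real c)) \<le> exp (cmod z * K)"
      using norm_exp_mult_le[of "\<lambda>_. c" K z] cK by simp
    show "cmod ((exp d - 1 - d) / d) \<le> e" by (rule remainder[OF d0 ds])
  qed (use cK e in auto)
  finally show ?thesis .
qed

lemma exp_difference_quotient_uniform:
  assumes cK: "\<And>y. \<bar>c y\<bar> \<le> K" and e: "e > 0"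
  shows "\<exists>s>0. \<forall>w y. w \<noteq> z \<longrightarrow> cmod (w - z) < s \<longrightarrow>
    cmod ((exp (\<i> * w * of_real (c y)) - exp (\<i> * z * of_real (c y))) / (w - z)
          - \<i> * of_real (c y) * exp (\<i> * z * of_real (c y))) \<le> e"
proof -
  have K: "K \<ge> 0" using cK[of undefined] by linarith
  define C where "C = exp (cmod z * K) * K"
  have C: "C \<ge> 0" unfolding C_def using K by simp
  obtain s0 where s0: "s0 > 0"
    "\<And>d::complex. d \<noteq> 0 \<Longrightarrow> cmod d < s0 \<Longrightarrow> cmod ((exp d - 1 - d) / d) \<le> e / (C + 1)"
    using exp_remainder_small[of "e / (C + 1)"] e C by auto
  have "cmod ((exp (\<i> * w * of_real (c y)) - exp (\<i> * z * of_real (c y))) / (w - z)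
          - \<i> * of_real (c y) * exp (\<i> * z * of_real (c y))) \<le> e"
    if w: "w \<noteq> z" "cmod (w - z) < s0 / (K + 1)" for w y
  proof -
    have "K * cmod (w - z) \<le> (K + 1) * cmod (w - z)" by (simp add: distrib_right)
    also have "\<dots> < s0" using w(2) K by (simp add: field_simps)
    finally have "K * cmod (w - z) < s0" .
    then have "cmod ((exp (\<i> * w * of_real (c y)) - exp (\<i> * z * of_real (c y))) / (w - z)
          - \<i> * of_real (c y) * exp (\<i> * z * of_real (c y))) \<le> exp (cmod z * K) * K * (e / (C + 1))"
      using e C by (intro norm_exp_difference_quotient_le[OF cK w(1) _ s0(2)]) auto
    also have "\<dots> \<le> e" using C e unfolding C_def[symmetric] by (simp add: field_simps)
    finally show ?thesis .
  qed
  then show ?thesis using s0(1) K by (intro exI[of _ "s0 / (K + 1)"]) auto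
qed

lemma fnorm2_weighted_comp_op_quotient_le:
  assumes inj: "inj_on p B"
    and m1: "\<And>y. cmod (m1 y) \<le> M1" and m2: "\<And>y. cmod (m2 y) \<le> M2" and m3: "\<And>y. cmod (m3 y) \<le> M3"
    and Q: "\<And>y. cmod ((m1 y - m2 y) / s - m3 y) \<le> Q"
  shows "fnorm2 (\<lambda>x. (Rep_ell2 (weighted_comp_op p B m1 f) x - Rep_ell2 (weighted_comp_op p B m2 f) x) / s
      - Rep_ell2 (weighted_comp_op p B m3 f) x) \<le> Q * ell2_norm f"
proof -
  have "(\<lambda>x. (Rep_ell2 (weighted_comp_op p B m1 f) x - Rep_ell2 (weighted_comp_op p B m2 f) x) / s
      - Rep_ell2 (weighted_comp_op p B m3 f) x)
      = (\<lambda>y. if y \<in> B then ((m1 y - m2 y) / s - m3 y) * Rep_ell2 f (p y) else 0)"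
    by (auto simp: Rep_weighted_comp_op[OF inj m1] Rep_weighted_comp_op[OF inj m2]
        Rep_weighted_comp_op[OF inj m3] field_simps)
  then show ?thesis using fnorm2_weighted_comp_op_le[OF inj Q] by simp
qed

lemma tendsto_weighted_comp_op_exp_difference_quotient:
  fixes z :: complex
  assumes inj: "inj_on p B" and cK: "\<And>y. \<bar>c y\<bar> \<le> K"
  defines "F \<equiv> \<lambda>z. weighted_comp_op p B (\<lambda>y. exp (\<i> * z * of_real (c y)))"
    and "D \<equiv> weighted_comp_op p B (\<lambda>y. \<i> * of_real (c y) * exp (\<i> * z * of_real (c y)))"
  shows "((\<lambda>w. comb_norm (\<lambda>f x. (Rep_ell2 (F w f) x - Rep_ell2 (F z f) x) / (w - z) - Rep_ell2 (D f) x))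
    \<longlongrightarrow> 0) (at z)"
  unfolding LIM_eq
proof (intro allI impI)
  let ?m = "\<lambda>z y. exp (\<i> * z * of_real (c y))"
  have K: "0 \<le> K" using cK[of undefined] by linarith
  have m: "cmod (?m z y) \<le> exp (cmod z * K)" for z y by (rule norm_exp_mult_le) (rule cK)
  have m': "cmod (\<i> * of_real (c y) * ?m z y) \<le> K * exp (cmod z * K)" for y
    unfolding norm_mult using cK[of y] m[of z y] K by (simp add: mult_mono)
  fix r :: real assume "r > 0"
  then obtain s where s: "s > 0" "\<And>w y. w \<noteq> z \<Longrightarrow> cmod (w - z) < s \<Longrightarrow>
      cmod ((?m w y - ?m z y) / (w - z) - \<i> * of_real (c y) * ?m z y) \<le> r / 2"
    using exp_difference_quotient_uniform[of c K "r / 2" z] cK by auto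
  have bound: "fnorm2 (\<lambda>x. (Rep_ell2 (F w f) x - Rep_ell2 (F z f) x) / (w - z) - Rep_ell2 (D f) x) \<le> r / 2"
    if w: "w \<noteq> z" "cmod (w - z) < s" and f: "ell2_norm f \<le> 1" for w f
  proof -
    have "fnorm2 (\<lambda>x. (Rep_ell2 (F w f) x - Rep_ell2 (F z f) x) / (w - z) - Rep_ell2 (D f) x) \<le> r / 2 * ell2_norm f"
      unfolding F_def D_def by (rule fnorm2_weighted_comp_op_quotient_le[OF inj m[of w] m[of z] m' s(2)[OF w]])
    also have "\<dots> \<le> r / 2" using f \<open>r > 0\<close> by (simp add: mult_left_le)
    finally show ?thesis .
  qed
  have "norm (comb_norm (\<lambda>f x. (Rep_ell2 (F w f) x - Rep_ell2 (F z f) x) / (w - z) - Rep_ell2 (D f) x) - 0) < r"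
    if w: "w \<noteq> z" "cmod (w - z) < s" for w
  proof -
    have "comb_norm (\<lambda>f x. (Rep_ell2 (F w f) x - Rep_ell2 (F z f) x) / (w - z) - Rep_ell2 (D f) x) \<le> r / 2"
      by (rule comb_norm_le) (rule bound[OF w])
    moreover have "0 \<le> comb_norm (\<lambda>f x. (Rep_ell2 (F w f) x - Rep_ell2 (F z f) x) / (w - z) - Rep_ell2 (D f) x)"
      by (rule comb_norm_nonneg) (rule bound[OF w])
    ultimately show ?thesis using \<open>r > 0\<close> by simp
  qed
  then show "\<exists>s>0. \<forall>w. w \<noteq> z \<and> norm (w - z) < s \<longrightarrow>
      norm (comb_norm (\<lambda>f x. (Rep_ell2 (F w f) x - Rep_ell2 (F z f) x) / (w - z) - Rep_ell2 (D f) x) - 0) < r"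
    using s(1) by (intro exI[of _ s]) simp
qed

lemma entire_op_weighted_comp_op_exp:
  assumes inj: "inj_on p B" and R: "\<And>y. y \<in> B \<Longrightarrow> dist y (p y) \<le> R" and cK: "\<And>y. \<bar>c y\<bar> \<le> K"
  shows "entire_op (\<lambda>z. weighted_comp_op p B (\<lambda>y. exp (\<i> * z * of_real (c y))))"
  unfolding entire_op_def
proof (intro conjI allI)
  have K: "0 \<le> K" using cK[of undefined] by linarith
  have m: "cmod (exp (\<i> * z * of_real (c y))) \<le> exp (cmod z * K)" for z y
    by (rule norm_exp_mult_le) (rule cK)
  fix z
  show "weighted_comp_op p B (\<lambda>y. exp (\<i> * z * of_real (c y))) \<in> uniform_roe"
    by (rule weighted_comp_op_in_uniform_roe[OF inj m[of z] R])
  have "cmod (\<i> * of_real (c y) * exp (\<i> * z * of_real (c y))) \<le> K * exp (cmod z * K)" for y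
    unfolding norm_mult using cK[of y] m[of z y] K by (simp add: mult_mono)
  then have "bounded_op (weighted_comp_op p B (\<lambda>y. \<i> * of_real (c y) * exp (\<i> * z * of_real (c y))))"
    by (rule bounded_op_weighted_comp_op[OF inj])
  then show "\<exists>D. bounded_op D \<and>
      ((\<lambda>w. comb_norm (\<lambda>f x. (Rep_ell2 (weighted_comp_op p B (\<lambda>y. exp (\<i> * w * of_real (c y))) f) x
        - Rep_ell2 (weighted_comp_op p B (\<lambda>y. exp (\<i> * z * of_real (c y))) f) x) / (w - z)
        - Rep_ell2 (D f) x)) \<longlongrightarrow> 0) (at z)"
    using tendsto_weighted_comp_op_exp_difference_quotient[OF inj, of c K z] cK by blast
qed

lemma sigma_weighted_comp_op:
  assumes inj: "inj_on p B" and h: "\<And>x. \<bar>h x\<bar> \<le> M"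
  shows "sigma h t (weighted_comp_op p B (\<lambda>_. 1))
    = weighted_comp_op p B (\<lambda>y. exp (\<i> * of_real t * of_real (h y - h (p y))))"
proof (rule op_eqI)
  let ?m = "\<lambda>y. exp (\<i> * of_real t * of_real (h y - h (p y)))"
  have m: "cmod (?m x) \<le> exp (cmod (of_real t) * (2 * M))" for x
    by (rule norm_exp_mult_le[where h = "\<lambda>y. h y - h (p y)"]) (use h abs_triangle_ineq4 in smt)
  have unit: "cmod (exp (\<i> * of_real (t * h x))) \<le> 1" "cmod (exp (- \<i> * of_real (t * h x))) \<le> 1"
    "cmod ((\<lambda>_. 1::complex) x) \<le> 1" for x
    by simp_all
  fix f y
  have "Rep_ell2 (sigma h t (weighted_comp_op p B (\<lambda>_. 1)) f) y = exp (\<i> * of_real (t * h y))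
      * Rep_ell2 (weighted_comp_op p B (\<lambda>_. 1) (mult_op (\<lambda>x. exp (- \<i> * of_real (t * h x))) f)) y"
    unfolding sigma_def comp_def by (rule Rep_mult_op[OF unit(1)])
  also have "\<dots> = exp (\<i> * of_real (t * h y))
      * (if y \<in> B then 1 * Rep_ell2 (mult_op (\<lambda>x. exp (- \<i> * of_real (t * h x))) f) (p y) else 0)"
    by (subst Rep_weighted_comp_op[OF inj unit(3)]) (rule refl)
  also have "\<dots> = exp (\<i> * of_real (t * h y))
      * (if y \<in> B then exp (- \<i> * of_real (t * h (p y))) * Rep_ell2 f (p y) else 0)"
    unfolding Rep_mult_op[OF unit(2)] by simp
  also have "\<dots> = (if y \<in> B then ?m y * Rep_ell2 f (p y) else 0)"
    by (simp add: exp_add[symmetric] algebra_simps)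
  also have "\<dots> = Rep_ell2 (weighted_comp_op p B ?m f) y"
    by (rule Rep_weighted_comp_op[OF inj m, symmetric])
  finally show "Rep_ell2 (sigma h t (weighted_comp_op p B (\<lambda>_. 1)) f) y = Rep_ell2 (weighted_comp_op p B ?m f) y" .
qed

lemma analytic_ext_weighted_comp_op:
  assumes h: "bounded (range h)" and inj: "inj_on p B" and R: "\<And>y. y \<in> B \<Longrightarrow> dist y (p y) \<le> R"
  shows "analytic_ext h (weighted_comp_op p B (\<lambda>_. 1))
    (\<lambda>z. weighted_comp_op p B (\<lambda>y. exp (\<i> * z * of_real (h y - h (p y)))))"
proof -
  obtain M where M: "\<And>x. \<bar>h x\<bar> \<le> M" using bounded_range_absE[OF h] by blast
  have diff: "\<bar>h y - h (p y)\<bar> \<le> 2 * M" for y using M[of y] M[of "p y"] by linarith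
  have "entire_op (\<lambda>z. weighted_comp_op p B (\<lambda>y. exp (\<i> * z * of_real (h y - h (p y)))))"
    using inj R diff by (rule entire_op_weighted_comp_op_exp)
  moreover have "sigma h t (weighted_comp_op p B (\<lambda>_. 1))
      = weighted_comp_op p B (\<lambda>y. exp (\<i> * of_real t * of_real (h y - h (p y))))" for t
    using inj M by (rule sigma_weighted_comp_op)
  ultimately show ?thesis unfolding analytic_ext_def by simp
qed

lemma bij_betw_inverse_pair:
  assumes "bij_betw g A B"
  defines "p \<equiv> inv_into A g"
  shows "inj_on g A" "inj_on p B"
    "\<And>x. x \<in> A \<Longrightarrow> g x \<in> B \<and> p (g x) = x" "\<And>y. y \<in> B \<Longrightarrow> p y \<in> A \<and> g (p y) = y"
  using assms bij_betw_inv_into[OF assms(1)]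
  by (auto simp: bij_betw_imp_inj_on bij_betw_apply bij_betw_inv_into_left bij_betw_inv_into_right)

lemma exp_weight_cocycle:
  "of_real (exp (\<beta> * h y)) * exp (\<i> * (\<i> * of_real \<beta>) * of_real (h y - h x)) = of_real (exp (\<beta> * h x))"
proof -
  have "exp (\<beta> * h y) * exp (- (\<beta> * (h y - h x))) = exp (\<beta> * h x)"
    by (simp add: exp_add[symmetric] algebra_simps)
  then show ?thesis by (simp only: exp_i_mult_i_real of_real_mult[symmetric])
qed

text \<open>\<open>kms_measure \<phi> h \<beta> A\<close> is \<open>\<phi> (exp (\<beta> h) \<chi>\<^sub>A)\<close>; the weight \<open>exp (\<beta> h)\<close> is what
  makes it invariant under partial translations.\<close>

definition kms_measure :: "('a op \<Rightarrow> complex) \<Rightarrow> ('a \<Rightarrow> real) \<Rightarrow> real \<Rightarrow> 'a set \<Rightarrow> real" where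
  "kms_measure \<phi> h \<beta> A = Re (\<phi> (mult_op (\<lambda>x. if x \<in> A then of_real (exp (\<beta> * h x)) else 0)))"

context
  fixes h :: "'a::metric_space \<Rightarrow> real" and \<beta> :: real and M :: real
  assumes M: "\<And>x. \<bar>h x\<bar> \<le> M"
begin

lemma norm_exp_indicator_le: "cmod (if x \<in> A then of_real (exp (\<beta> * h x)) else 0) \<le> exp (\<bar>\<beta>\<bar> * M)"
  using exp_mult_bounded(2)[of h M \<beta> x, OF M] by auto

lemma exp_indicator_in_uniform_roe:
  "mult_op (\<lambda>x. if x \<in> A then of_real (exp (\<beta> * h x)) else 0) \<in> uniform_roe"
  by (rule mult_op_in_uniform_roe) (rule norm_exp_indicator_le)

lemma Rep_exp_indicator:
  "Rep_ell2 (mult_op (\<lambda>x. if x \<in> A then of_real (exp (\<beta> * h x)) else 0) f) y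
    = (if y \<in> A then of_real (exp (\<beta> * h y)) else 0) * Rep_ell2 f y"
  by (rule Rep_mult_op) (rule norm_exp_indicator_le)

context
  fixes \<phi> :: "'a op \<Rightarrow> complex"
  assumes kms: "kms_state h \<beta> \<phi>"
begin

lemma kms_state_linear:
  "a \<in> uniform_roe \<Longrightarrow> b \<in> uniform_roe \<Longrightarrow> \<phi> (op_add a (op_scale c b)) = \<phi> a + c * \<phi> b"
  using kms unfolding kms_state_def is_state_def by blast

lemma kms_state_positive: "a \<in> uniform_roe \<Longrightarrow> positive_op a \<Longrightarrow> 0 \<le> Re (\<phi> a)"
  using kms unfolding kms_state_def is_state_def by blast

lemma kms_measure_nonneg: "0 \<le> kms_measure \<phi> h \<beta> A"
proof -
  have "positive_op (mult_op (\<lambda>x. if x \<in> A then of_real (exp (\<beta> * h x)) else 0))"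
    by (rule positive_op_mult_op) (rule norm_exp_indicator_le, auto)
  then show ?thesis
    unfolding kms_measure_def by (rule kms_state_positive[OF exp_indicator_in_uniform_roe])
qed

lemma kms_measure_Un:
  assumes "A \<inter> B = {}"
  shows "kms_measure \<phi> h \<beta> (A \<union> B) = kms_measure \<phi> h \<beta> A + kms_measure \<phi> h \<beta> B"
proof -
  let ?E = "\<lambda>A. mult_op (\<lambda>x. if x \<in> A then of_real (exp (\<beta> * h x)) else 0)"
  have "?E (A \<union> B) = op_add (?E A) (op_scale 1 (?E B))"
    by (rule op_eqI, simp only: Rep_op_add_scale Rep_exp_indicator) (use assms in auto)
  then show ?thesis
    unfolding kms_measure_def using kms_state_linear[OF exp_indicator_in_uniform_roe exp_indicator_in_uniform_roe]
    by simp
qed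

lemma kms_measure_UNIV_pos: "kms_measure \<phi> h \<beta> UNIV > 0"
proof -
  define c where "c = exp (- (\<bar>\<beta>\<bar> * M))"
  define P where "P = mult_op (\<lambda>x. of_real (exp (\<beta> * h x)) - of_real c)"
  have P_bound: "cmod (of_real (exp (\<beta> * h x)) - of_real c) \<le> exp (\<bar>\<beta>\<bar> * M) + c" for x
  proof -
    have "cmod (of_real (exp (\<beta> * h x)) - of_real c) = \<bar>exp (\<beta> * h x) - c\<bar>"
      by (metis norm_of_real of_real_diff)
    moreover have "exp (\<beta> * h x) \<le> exp (\<bar>\<beta>\<bar> * M)" by (rule exp_mult_bounded(2)[of h M, OF M])
    moreover have "0 < c" "0 < exp (\<beta> * h x)" unfolding c_def by simp_all
    ultimately show ?thesis by arith
  qed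
  have P: "P \<in> uniform_roe" "positive_op P"
    unfolding P_def
    by (rule mult_op_in_uniform_roe, rule P_bound)
      (rule positive_op_mult_op, rule P_bound, simp,
       use exp_mult_bounded(1)[of h M \<beta>, OF M] in \<open>simp add: c_def\<close>)
  have "mult_op (\<lambda>x. if x \<in> UNIV then of_real (exp (\<beta> * h x)) else 0) = op_add P (op_scale (of_real c) id)"
    by (rule op_eqI)
      (simp only: Rep_op_add_scale Rep_exp_indicator P_def Rep_mult_op[OF P_bound], simp add: algebra_simps)
  then have "kms_measure \<phi> h \<beta> UNIV = Re (\<phi> P) + c"
    using kms kms_state_linear[OF P(1) id_in_uniform_roe] unfolding kms_measure_def kms_state_def is_state_def by simp
  moreover have "0 \<le> Re (\<phi> P)" by (rule kms_state_positive[OF P])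
  moreover have "0 < c" unfolding c_def by simp
  ultimately show ?thesis by linarith
qed

text \<open>For a partial translation \<open>g : A \<rightarrow> B\<close> with inverse \<open>p\<close>, let \<open>V\<close> implement \<open>p\<close> and
  let \<open>a\<close> implement \<open>g\<close> with weight \<open>exp (\<beta> h) \<circ> g\<close>. Then \<open>a \<sigma>\<^sub>i\<^sub>\<beta>(V) = exp (\<beta> h) \<chi>\<^sub>A\<close>
  and \<open>V a = exp (\<beta> h) \<chi>\<^sub>B\<close>, so the KMS condition gives \<open>\<mu> A = \<mu> B\<close>.\<close>

lemma kms_measure_partial_translation:
  assumes "partial_translation g A B"
  shows "kms_measure \<phi> h \<beta> A = kms_measure \<phi> h \<beta> B"
proof -
  obtain R where bij: "bij_betw g A B" and R: "\<And>x. x \<in> A \<Longrightarrow> dist x (g x) \<le> R"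
    using assms unfolding partial_translation_def by blast
  define p where "p = inv_into A g"
  note inverse = bij_betw_inverse_pair[OF bij, folded p_def]
  have R_p: "dist y (p y) \<le> R" if "y \<in> B" for y
    using R[of "p y"] inverse(4)[OF that] by (simp add: dist_commute)
  have h: "bounded (range h)" using M unfolding bounded_iff by auto
  let ?E = "\<lambda>x. of_real (exp (\<beta> * h x)) :: complex"
  let ?m = "\<lambda>z y. exp (\<i> * z * of_real (h y - h (p y)))"
  let ?V = "weighted_comp_op p B (\<lambda>_. 1)"
  let ?F = "\<lambda>z. weighted_comp_op p B (?m z)"
  let ?a = "weighted_comp_op g A (\<lambda>x. ?E (g x))"
  have one: "cmod ((\<lambda>_. 1::complex) y) \<le> 1" for y :: 'a by simp
  have E: "cmod (?E (g x)) \<le> exp (\<bar>\<beta>\<bar> * M)" for x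
    using exp_mult_bounded(2)[of h M \<beta> "g x", OF M] by simp
  have m: "cmod (?m z y) \<le> exp (cmod z * (2 * M))" for z y
    by (rule norm_exp_mult_le[where h = "\<lambda>y. h y - h (p y)"]) (use M abs_triangle_ineq4 in smt)
  have "?a \<in> uniform_roe" using inverse(1) E R by (rule weighted_comp_op_in_uniform_roe)
  moreover have "?V \<in> uniform_roe" using inverse(2) one R_p by (rule weighted_comp_op_in_uniform_roe)
  moreover have "analytic_ext h ?V ?F" using h inverse(2) R_p by (rule analytic_ext_weighted_comp_op)
  ultimately have "\<phi> (?a \<circ> ?F (\<i> * of_real \<beta>)) = \<phi> (?V \<circ> ?a)"
    using kms unfolding kms_state_def by blast
  moreover have "?a \<circ> ?F (\<i> * of_real \<beta>) = mult_op (\<lambda>x. if x \<in> A then ?E x else 0)"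
  proof -
    have "?E (g x) * ?m (\<i> * of_real \<beta>) (g x) = ?E x" if "x \<in> A" for x
      using exp_weight_cocycle[of \<beta> h "g x" x] inverse(3)[OF that] by simp
    then show ?thesis
      by (intro op_eqI, simp only: comp_def Rep_weighted_comp_op[OF inverse(1) E] Rep_exp_indicator
          Rep_weighted_comp_op[OF inverse(2) m[of "\<i> * of_real \<beta>"]])
        (auto simp: inverse(3) mult.assoc[symmetric])
  qed
  moreover have "?V \<circ> ?a = mult_op (\<lambda>x. if x \<in> B then ?E x else 0)"
    by (rule op_eqI)
      (use inverse(4) in \<open>auto simp: Rep_weighted_comp_op[OF inverse(1) E]
        Rep_weighted_comp_op[OF inverse(2) one] Rep_exp_indicator\<close>)
  ultimately show ?thesis unfolding kms_measure_def by simp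
qed

lemma kms_state_imp_amenable: "amenable TYPE('a)"
  unfolding amenable_def
  using kms_measure_nonneg kms_measure_UNIV_pos kms_measure_Un kms_measure_partial_translation
  by (intro exI[of _ "kms_measure \<phi> h \<beta>"]) (metis less_irrefl)

end

end

theorem theorem2p4:
  fixes h :: "'a::metric_space \<Rightarrow> real" and \<beta> :: real
  assumes "ulf TYPE('a)"
    and "bounded (range h)"
  shows "(\<exists>\<phi>. kms_state h \<beta> \<phi>) \<longleftrightarrow> amenable TYPE('a)"
proof
  assume "\<exists>\<phi>. kms_state h \<beta> \<phi>"
  then obtain \<phi> where \<phi>: "kms_state h \<beta> \<phi>" by blast
  obtain M where M: "\<And>x. \<bar>h x\<bar> \<le> M" using bounded_range_absE[OF assms(2)] by blast
  from M \<phi> show "amenable TYPE('a)" by (rule kms_state_imp_amenable)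
next
  assume "amenable TYPE('a)"
  then obtain \<mu> :: "'a set \<Rightarrow> real" where "fin_add_measure \<mu>" "translation_invariant \<mu>" "\<mu> UNIV > 0"
    by (rule amenableE)
  then show "\<exists>\<phi>. kms_state h \<beta> \<phi>" using kms_state_gibbs_state[OF _ _ _ assms] by blast
qed

end
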